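(* Let the setting and the algorithm RandProx-CP be as in the context. Suppose that $\mu_g>0$ and $\mu_{h^*}>0$, and that $\gamma>0$, $\tau>0$, $\gamma\tau\big((1-\zeta)\|K\|^2+\omega_{\mathrm{ran}}\big)\le1$. For $t\ge0$ let $\Psi^t:=\frac{1}{\gamma}\|x^t-x^\star\|^2+(1+\omega)\big(\frac{1}{\tau}+2\mu_{h^*}\big)\|u^t-u^\star\|^2$, where $x^\star,u^\star$ are the unique primal and dual solutions. Then for every $t\ge0$, $\mathbb{E}[\Psi^t]\le c^t\Psi^0$, where $$c:=\max\left(\frac{1}{1+\gamma\mu_g},\ 1-\frac{2\tau\mu_{h^*}}{(1+\omega)(1+2\tau\mu_{h^*})}\right)=1-\min\left(\frac{\gamma\mu_g}{1+\gamma\mu_g},\ \frac{2\tau\mu_{h^*}}{(1+\omega)(1+2\tau\mu_{h^*})}\right)<1.$$ Moreover, $(x^t)$ and $(\hat{x}^t)$ both converge to $x^\star$ and $(u^t)$ converges to $u^\star$, almost surely.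
   Context: $\mathcal{X},\mathcal{U}$ finite-dimensional real Hilbert spaces, $K:\mathcal{X}\to\mathcal{U}$ a nonzero linear operator with adjoint $K^*$. $g:\mathcal{X}\to\mathbb{R}\cup\{+\infty\}$, $h:\mathcal{U}\to\mathbb{R}\cup\{+\infty\}$ proper closed convex; $g$ is $\mu_g$-strongly convex and the conjugate $h^*$ is $\mu_{h^*}$-strongly convex (a convex $\phi$ is $\mu$-strongly convex if $\phi-\frac{\mu}{2}\|\cdot\|^2$ is convex). $\mathrm{prox}_{\gamma\phi}(x):=\arg\min_{x'}(\gamma\phi(x')+\frac12\|x'-x\|^2)$. Primal problem: minimize $g(x)+h(Kx)$; dual: minimize $g^*(-K^*u)+h^*(u)$. It is assumed there exists $(x^\star,u^\star)$ with $0\in\partial g(x^\star)+K^*u^\star$, $0\in-Kx^\star+\partial h^*(u^\star)$. Algorithm RandProx-CP: inputs $x^0\in\mathcal{X}$, $u^0\in\mathcal{U}$, $\gamma>0,\tau>0,\omega\ge0$; $\hat{x}^0:=\mathrm{prox}_{\gamma g}(x^0-\gamma K^*u^0)$; for $t\ge0$: $d^t:=\mathcal{R}^t\big(\mathrm{prox}_{\tau h^*}(u^t+\tau K\hat{x}^t)-u^t\big)$; $u^{t+1}:=u^t+\frac{1}{1+\omega}d^t$; $x^{t+1}:=\hat{x}^t-\gamma K^*d^t$; $\hat{x}^{t+1}:=\mathrm{prox}_{\gamma g}\big(\hat{x}^t-\gamma K^*(u^{t+1}+d^t)\big)$ (equivalently $\hat{x}^{t+1}=\mathrm{prox}_{\gamma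 g}(x^{t+1}-\gamma K^*u^{t+1})$). With $\mathcal{F}_t$ the $\sigma$-algebra generated by $(x^0,u^0),\dots,(x^t,u^t)$ and $r^t:=\mathrm{prox}_{\tau h^*}(u^t+\tau K\hat{x}^t)-u^t$, the random estimate $\mathcal{R}^t(r^t)$ satisfies $\mathbb{E}[\mathcal{R}^t(r^t)\mid\mathcal{F}_t]=r^t$, $\mathbb{E}[\|\mathcal{R}^t(r^t)-r^t\|^2\mid\mathcal{F}_t]\le\omega\|r^t\|^2$, $\mathbb{E}[\|K^*(\mathcal{R}^t(r^t)-r^t)\|^2\mid\mathcal{F}_t]\le\omega_{\mathrm{ran}}\|r^t\|^2-\zeta\|K^*r^t\|^2$, for constants $\omega_{\mathrm{ran}}\ge0$, $\zeta\in[0,1]$. *)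

theory Defs
  imports "HOL-Analysis.Analysis" "HOL-Probability.Probability"
begin

definition proper_fun :: "('a \<Rightarrow> ereal) \<Rightarrow> bool" where
  "proper_fun \<phi> \<longleftrightarrow> (\<forall>x. \<phi> x \<noteq> -\<infinity>) \<and> (\<exists>x. \<phi> x \<noteq> \<infinity>)"

text \<open>closed = lower semicontinuous = closed epigraph\<close>
definition closed_fun :: "('a::topological_space \<Rightarrow> ereal) \<Rightarrow> bool" where
  "closed_fun \<phi> \<longleftrightarrow> closed {(x, s::real). \<phi> x \<le> ereal s}"

definition convex_fun :: "('a::real_vector \<Rightarrow> ereal) \<Rightarrow> bool" where
  "convex_fun \<phi> \<longleftrightarrow> (\<forall>x y l. 0 < l \<and> l < 1 \<longrightarrow>
      \<phi> ((1 - l) *\<^sub>R x + l *\<^sub>R y) \<le> ereal (1 - l) * \<phi> x + ereal l * \<phi> y)"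

definition strongly_convex :: "real \<Rightarrow> ('a::real_normed_vector \<Rightarrow> ereal) \<Rightarrow> bool" where
  "strongly_convex \<mu> \<phi> \<longleftrightarrow> convex_fun (\<lambda>x. \<phi> x - ereal (\<mu> / 2 * (norm x)\<^sup>2))"

definition conj_fun :: "('a::real_inner \<Rightarrow> ereal) \<Rightarrow> 'a \<Rightarrow> ereal" where
  "conj_fun \<phi> u = (SUP x. ereal (inner u x) - \<phi> x)"

text \<open>Subdifferential (empty outside the domain)\<close>
definition subdiff :: "('a::real_inner \<Rightarrow> ereal) \<Rightarrow> 'a \<Rightarrow> 'a set" where
  "subdiff \<phi> x = {v. \<bar>\<phi> x\<bar> \<noteq> \<infinity> \<and> (\<forall>y. \<phi> x + ereal (inner v (y - x)) \<le> \<phi> y)}"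

definition prox :: "real \<Rightarrow> ('a::real_normed_vector \<Rightarrow> ereal) \<Rightarrow> 'a \<Rightarrow> 'a" where
  "prox \<gamma> \<phi> x = (THE p. \<forall>y. ereal \<gamma> * \<phi> p + ereal ((norm (p - x))\<^sup>2 / 2)
                              \<le> ereal \<gamma> * \<phi> y + ereal ((norm (y - x))\<^sup>2 / 2))"

definition gen_filtration :: "'w measure \<Rightarrow> (nat \<Rightarrow> 'w \<Rightarrow> 'x::topological_space)
    \<Rightarrow> (nat \<Rightarrow> 'w \<Rightarrow> 'u::topological_space) \<Rightarrow> nat \<Rightarrow> 'w measure" where
  "gen_filtration M x u t = sigma (space M)
     ((\<Union>s\<le>t. {x s -` A \<inter> space M | A. A \<in> sets borel})
      \<union> (\<Union>s\<le>t. {u s -` B \<inter> space M | B. B \<in> sets borel}))"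

end

(* The Lyapunov function Psi t = |x t - xs|^2 / gamma + (1 + omega) (1 / tau + 2 mu_h) |u t - us|^2
   contracts in conditional expectation. Given the past, the next iterate is its conditional mean
   (xhat t - gamma (adjoint K) (r t), u t + r t / (1 + omega)), where r t is the exact dual step,
   plus the centred error of the estimate d t. Strong monotonicity of the proximal maps of g and
   of conj h, which comes from their strong convexity, bounds Psi at the conditional mean plus
   the two variance bounds by c Psi t once the step-size condition absorbs the terms in
   adjoint K; the cross term has mean zero by unbiasedness. Hence E Psi t <= c^t Psi 0. Since
   the c^t are summable, so is Psi t almost surely, hence Psi t -> 0, which gives x t -> xs and
   u t -> us, and xhat t -> xs by continuity of the proximal map. Strong convexity also
   identifies the primal and dual minimisers xs, us with the saddle point. *)

theory Submission
  imports Defs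
begin

section \<open>Strong convexity and subgradients\<close>

lemma norm_convex_combination_sq:
  fixes x y :: "'a::real_inner"
  shows "(norm ((1 - l) *\<^sub>R x + l *\<^sub>R y))\<^sup>2
           = (1 - l) * (norm x)\<^sup>2 + l * (norm y)\<^sup>2 - l * (1 - l) * (norm (x - y))\<^sup>2"
  by (simp add: power2_norm_eq_inner inner_add_left inner_add_right inner_diff_left
      inner_diff_right inner_commute algebra_simps)

lemma norm_sq_add_eq:
  fixes a b :: "'a::real_inner"
  shows "(norm (a + b))\<^sup>2 = (norm a)\<^sup>2 + 2 * inner a b + (norm b)\<^sup>2"
  by (simp add: power2_norm_eq_inner inner_add_left inner_add_right inner_commute)

lemma norm_sq_diff_eq:
  fixes a b :: "'a::real_inner"
  shows "(norm (a - b))\<^sup>2 = (norm a)\<^sup>2 - 2 * inner a b + (norm b)\<^sup>2"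
  by (simp add: power2_norm_eq_inner inner_diff_left inner_diff_right inner_commute)

lemma norm_sq_add_le:
  fixes a b :: "'a::real_inner"
  shows "(norm (a + b))\<^sup>2 \<le> 2 * (norm a)\<^sup>2 + 2 * (norm b)\<^sup>2"
  using norm_sq_add_eq[of a b] norm_sq_diff_eq[of a b] zero_le_power2[of "norm (a - b)"] by linarith

lemma norm_midpoint_diff_sq:
  fixes x y z :: "'a::real_inner"
  shows "(norm ((1 / 2) *\<^sub>R (x + y) - z))\<^sup>2
           = ((norm (x - z))\<^sup>2 + (norm (y - z))\<^sup>2) / 2 - (norm (x - y))\<^sup>2 / 4"
proof -
  have "(1 / 2 :: real) *\<^sub>R z + (1 / 2) *\<^sub>R z = z"
    by (metis scaleR_add_left field_sum_of_halves scaleR_one)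
  then have eq: "(1 / 2) *\<^sub>R (x + y) - z = (1 - 1 / 2) *\<^sub>R (x - z) + (1 / 2 :: real) *\<^sub>R (y - z)"
    by (simp add: algebra_simps)
  show ?thesis
    unfolding eq norm_convex_combination_sq by (simp add: algebra_simps)
qed

lemma strongly_convex_zero_iff [simp]: "strongly_convex 0 \<phi> \<longleftrightarrow> convex_fun \<phi>"
  by (simp add: strongly_convex_def)

lemma strongly_convex_combination_le:
  fixes \<phi> :: "'a::real_inner \<Rightarrow> ereal"
  assumes sc: "strongly_convex \<mu> \<phi>" and x: "\<phi> x = ereal a" and y: "\<phi> y = ereal b"
    and l: "0 < l" "l < 1"
  shows "\<phi> ((1 - l) *\<^sub>R x + l *\<^sub>R y)
           \<le> ereal ((1 - l) * a + l * b - \<mu> / 2 * l * (1 - l) * (norm (x - y))\<^sup>2)"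
proof -
  define z where "z = (1 - l) *\<^sub>R x + l *\<^sub>R y"
  have "\<phi> z - ereal (\<mu> / 2 * (norm z)\<^sup>2)
      \<le> ereal (1 - l) * (\<phi> x - ereal (\<mu> / 2 * (norm x)\<^sup>2))
         + ereal l * (\<phi> y - ereal (\<mu> / 2 * (norm y)\<^sup>2))"
    using sc l unfolding strongly_convex_def convex_fun_def z_def by blast
  also have "\<dots> = ereal ((1 - l) * a + l * b - \<mu> / 2 * l * (1 - l) * (norm (x - y))\<^sup>2
                        - \<mu> / 2 * (norm z)\<^sup>2)"
    unfolding z_def norm_convex_combination_sq by (simp add: x y field_simps)
  finally show ?thesis
    unfolding z_def[symmetric] by (cases "\<phi> z") simp_all
qed

lemma ereal_convex_combination_le_shifted:
  fixes a b c :: ereal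
  assumes l: "0 < l" "l < 1"
    and shifted: "c - ereal nz \<le> ereal (1 - l) * (a - ereal nx) + ereal l * (b - ereal ny)"
    and nz: "nz \<le> (1 - l) * nx + l * ny"
  shows "c \<le> ereal (1 - l) * a + ereal l * b"
proof (cases "a = \<infinity> \<or> b = \<infinity>")
  case True
  then show ?thesis
    using l by (cases a; cases b) auto
next
  case False
  then consider (finite) ra rb where "a = ereal ra" "b = ereal rb"
    | (minf) "a = -\<infinity> \<or> b = -\<infinity>"
    by (cases a; cases b) auto
  then show ?thesis
  proof cases
    case finite
    have fin: "c - ereal nz \<le> ereal ((1 - l) * (ra - nx) + l * (rb - ny))"
      using shifted finite by simp
    show ?thesis
    proof (cases c)
      case (real rc)
      have "rc - nz \<le> (1 - l) * ra + l * rb - ((1 - l) * nx + l * ny)"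
        using fin real by (simp add: algebra_simps)
      then have "rc \<le> (1 - l) * ra + l * rb"
        using nz by linarith
      then show ?thesis
        using real finite by simp
    next
      case PInf
      then show ?thesis
        using fin by simp
    qed simp
  next
    case minf
    then have "ereal (1 - l) * (a - ereal nx) + ereal l * (b - ereal ny) = -\<infinity>"
      using False l by (cases a; cases b) auto
    then have "c - ereal nz \<le> -\<infinity>"
      using shifted by (simp only:)
    then show ?thesis
      by (cases c) auto
  qed
qed

lemma strongly_convex_imp_convex_fun:
  fixes \<phi> :: "'a::real_inner \<Rightarrow> ereal"
  assumes sc: "strongly_convex \<mu> \<phi>" and \<mu>: "\<mu> \<ge> 0"
  shows "convex_fun \<phi>"
  unfolding convex_fun_def
proof (intro allI impI)
  fix x y :: 'a and l :: real
  assume l: "0 < l \<and> l < 1"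
  define z where "z = (1 - l) *\<^sub>R x + l *\<^sub>R y"
  define nx ny nz where "nx = \<mu> / 2 * (norm x)\<^sup>2" and "ny = \<mu> / 2 * (norm y)\<^sup>2"
    and "nz = \<mu> / 2 * (norm z)\<^sup>2"
  have sc_z: "\<phi> z - ereal nz \<le> ereal (1 - l) * (\<phi> x - ereal nx) + ereal l * (\<phi> y - ereal ny)"
    using sc l unfolding strongly_convex_def convex_fun_def z_def nx_def ny_def nz_def by blast
  have "nz = (1 - l) * nx + l * ny - \<mu> / 2 * (l * (1 - l) * (norm (x - y))\<^sup>2)"
    unfolding nx_def ny_def nz_def z_def norm_convex_combination_sq by (simp add: field_simps)
  moreover have "0 \<le> \<mu> / 2 * (l * (1 - l) * (norm (x - y))\<^sup>2)"
    using \<mu> l by simp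
  ultimately have "nz \<le> (1 - l) * nx + l * ny"
    by linarith
  then show "\<phi> z \<le> ereal (1 - l) * \<phi> x + ereal l * \<phi> y"
    using ereal_convex_combination_le_shifted[OF _ _ sc_z] l by blast
qed

lemma le_of_forall_le_add_scaled:
  fixes A B C :: real
  assumes "\<And>l. 0 < l \<Longrightarrow> l < 1 \<Longrightarrow> A \<le> B + l * C"
  shows "A \<le> B"
proof (rule field_le_epsilon)
  fix e :: real
  assume e: "0 < e"
  define l where "l = min (1 / 2) (e / (\<bar>C\<bar> + 1))"
  have l: "0 < l" "l < 1"
    using e by (auto simp: l_def)
  have "l * C \<le> l * \<bar>C\<bar>"
    using l by (intro mult_left_mono) auto
  also have "\<dots> \<le> e / (\<bar>C\<bar> + 1) * \<bar>C\<bar>"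
    by (intro mult_right_mono) (auto simp: l_def)
  also have "\<dots> \<le> e"
    using e by (simp add: field_simps)
  finally show "A \<le> B + e"
    using assms[OF l] by linarith
qed

lemma strongly_convex_subdiff_growth:
  fixes \<phi> :: "'a::real_inner \<Rightarrow> ereal"
  assumes sc: "strongly_convex \<mu> \<phi>" and v: "v \<in> subdiff \<phi> p"
  shows "\<phi> p + ereal (inner v (y - p) + \<mu> / 2 * (norm (y - p))\<^sup>2) \<le> \<phi> y"
proof -
  obtain a where a: "\<phi> p = ereal a"
    using v unfolding subdiff_def by (cases "\<phi> p") auto
  have sub: "\<phi> p + ereal (inner v (y' - p)) \<le> \<phi> y'" for y'
    using v unfolding subdiff_def by blast
  show ?thesis
  proof (cases "\<phi> y")
    case (real b)
    define M where "M = \<mu> / 2 * (norm (y - p))\<^sup>2"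
    have "a + inner v (y - p) + M \<le> b + l * M" if l: "0 < l" "l < 1" for l
    proof -
      have "(1 - l) *\<^sub>R p + l *\<^sub>R y - p = l *\<^sub>R (y - p)"
        by (simp add: algebra_simps)
      then have "ereal (a + l * inner v (y - p)) \<le> \<phi> ((1 - l) *\<^sub>R p + l *\<^sub>R y)"
        using sub[of "(1 - l) *\<^sub>R p + l *\<^sub>R y"] a by simp
      also have "\<dots> \<le> ereal ((1 - l) * a + l * b - l * (1 - l) * M)"
        using strongly_convex_combination_le[OF sc a real l]
        by (simp add: M_def norm_minus_commute mult_ac)
      finally have "l * (a + inner v (y - p) + M) \<le> l * (b + l * M)"
        by (simp add: algebra_simps)
      then show ?thesis
        using l by simp
    qed
    then have "a + inner v (y - p) + M \<le> b"
      by (rule le_of_forall_le_add_scaled)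
    then show ?thesis
      using a real by (simp add: M_def)
  next
    case MInf
    then show ?thesis
      using sub[of y] a by simp
  qed simp
qed

lemma subdiff_strongly_monotone:
  fixes \<phi> :: "'a::real_inner \<Rightarrow> ereal"
  assumes sc: "strongly_convex \<mu> \<phi>" and v1: "v1 \<in> subdiff \<phi> p1" and v2: "v2 \<in> subdiff \<phi> p2"
  shows "\<mu> * (norm (p1 - p2))\<^sup>2 \<le> inner (v1 - v2) (p1 - p2)"
proof -
  obtain a1 a2 where a1: "\<phi> p1 = ereal a1" and a2: "\<phi> p2 = ereal a2"
    using v1 v2 unfolding subdiff_def by (cases "\<phi> p1"; cases "\<phi> p2") auto
  have "a1 - inner v1 (p1 - p2) + \<mu> / 2 * (norm (p1 - p2))\<^sup>2 \<le> a2"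
    using strongly_convex_subdiff_growth[OF sc v1, of p2] a1 a2
    by (simp add: norm_minus_commute inner_diff_right)
  moreover have "a2 + inner v2 (p1 - p2) + \<mu> / 2 * (norm (p1 - p2))\<^sup>2 \<le> a1"
    using strongly_convex_subdiff_growth[OF sc v2, of p1] a1 a2 by simp
  ultimately show ?thesis
    by (simp add: inner_diff_left)
qed

section \<open>Proximal maps\<close>

definition prox_objective :: "real \<Rightarrow> ('a::real_normed_vector \<Rightarrow> ereal) \<Rightarrow> 'a \<Rightarrow> 'a \<Rightarrow> ereal" where
  "prox_objective \<gamma> \<phi> z y = ereal \<gamma> * \<phi> y + ereal ((norm (y - z))\<^sup>2 / 2)"

lemma prox_eq_The: "prox \<gamma> \<phi> z = (THE p. \<forall>y. prox_objective \<gamma> \<phi> z p \<le> prox_objective \<gamma> \<phi> z y)"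
  unfolding prox_def prox_objective_def ..

lemma prox_objective_eq_ereal:
  assumes "\<gamma> > 0" and "prox_objective \<gamma> \<phi> z y = ereal A"
  shows "\<phi> y = ereal ((A - (norm (y - z))\<^sup>2 / 2) / \<gamma>)"
  using assms unfolding prox_objective_def by (cases "\<phi> y") (auto simp: field_simps)

lemma closed_fun_prox_objective:
  assumes cl: "closed_fun \<phi>" and \<gamma>: "\<gamma> > 0"
  shows "closed_fun (prox_objective \<gamma> \<phi> z)"
proof -
  define T where "T p = (fst p, (snd p - (norm (fst p - z))\<^sup>2 / 2) / \<gamma>)" for p :: "'a \<times> real"
  have "prox_objective \<gamma> \<phi> z y \<le> ereal s \<longleftrightarrow> \<phi> y \<le> ereal ((s - (norm (y - z))\<^sup>2 / 2) / \<gamma>)" for y s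
    using \<gamma> unfolding prox_objective_def by (cases "\<phi> y") (auto simp: field_simps)
  then have epi: "{(y, s). prox_objective \<gamma> \<phi> z y \<le> ereal s} = T -` {(y, s). \<phi> y \<le> ereal s}"
    by (auto simp: T_def)
  show ?thesis
    unfolding closed_fun_def epi
  proof (rule continuous_closed_vimage)
    show "closed {(y, s). \<phi> y \<le> ereal s}"
      using cl unfolding closed_fun_def .
    show "continuous (at p) T" for p
      using \<gamma> unfolding T_def by (auto intro!: continuous_intros)
  qed
qed

lemma prox_objective_midpoint:
  fixes \<phi> :: "'a::real_inner \<Rightarrow> ereal"
  assumes cv: "convex_fun \<phi>" and \<gamma>: "\<gamma> > 0"
    and x: "prox_objective \<gamma> \<phi> z x = ereal A" and y: "prox_objective \<gamma> \<phi> z y = ereal B"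
  shows "prox_objective \<gamma> \<phi> z ((1 / 2) *\<^sub>R (x + y)) \<le> ereal ((A + B) / 2 - (norm (x - y))\<^sup>2 / 8)"
proof -
  define a b where "a = (A - (norm (x - z))\<^sup>2 / 2) / \<gamma>" and "b = (B - (norm (y - z))\<^sup>2 / 2) / \<gamma>"
  have mid: "(1 / 2) *\<^sub>R (x + y) = (1 - 1 / 2) *\<^sub>R x + (1 / 2 :: real) *\<^sub>R y"
    by (simp add: algebra_simps)
  have \<phi>x: "\<phi> x = ereal a" and \<phi>y: "\<phi> y = ereal b"
    using prox_objective_eq_ereal[OF \<gamma> x] prox_objective_eq_ereal[OF \<gamma> y] by (simp_all add: a_def b_def)
  have \<phi>_mid: "\<phi> ((1 / 2) *\<^sub>R (x + y)) \<le> ereal ((a + b) / 2)"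
    using strongly_convex_combination_le[of 0 \<phi> x a y b "1 / 2"] cv \<phi>x \<phi>y
    unfolding mid by (simp add: add_divide_distrib)
  note norm_mid = norm_midpoint_diff_sq[of x y z]
  show ?thesis
  proof (cases "\<phi> ((1 / 2) *\<^sub>R (x + y))")
    case (real c)
    have "\<gamma> * c \<le> \<gamma> * ((a + b) / 2)"
      using \<phi>_mid real \<gamma> by simp
    also have "\<dots> = (A + B) / 2 - ((norm (x - z))\<^sup>2 + (norm (y - z))\<^sup>2) / 4"
      using \<gamma> by (simp add: a_def b_def field_simps)
    moreover have "(norm ((1 / 2) *\<^sub>R (x + y) - z))\<^sup>2 / 2
        = ((norm (x - z))\<^sup>2 + (norm (y - z))\<^sup>2) / 4 - (norm (x - y))\<^sup>2 / 8"
      unfolding norm_mid by (simp add: field_simps)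
    ultimately have "\<gamma> * c + (norm ((1 / 2) *\<^sub>R (x + y) - z))\<^sup>2 / 2 \<le> (A + B) / 2 - (norm (x - y))\<^sup>2 / 8"
      by linarith
    then show ?thesis
      using real by (simp add: prox_objective_def)
  next
    case PInf
    then show ?thesis
      using \<phi>_mid by simp
  next
    case MInf
    then show ?thesis
      using \<gamma> by (simp add: prox_objective_def)
  qed
qed

lemma prox_objective_bounded_below:
  assumes v0: "v0 \<in> subdiff \<phi> p0" and \<gamma>: "\<gamma> > 0"
  shows "\<exists>m. \<forall>y. ereal m \<le> prox_objective \<gamma> \<phi> z y"
proof -
  obtain a0 where a0: "\<phi> p0 = ereal a0"
    using v0 unfolding subdiff_def by (cases "\<phi> p0") auto
  have sub: "ereal (a0 + inner v0 (y - p0)) \<le> \<phi> y" for y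
    using v0 a0 unfolding subdiff_def by auto
  define m where "m = \<gamma> * a0 + \<gamma> * inner v0 (z - p0) - \<gamma>\<^sup>2 * (norm v0)\<^sup>2 / 2"
  have "ereal m \<le> prox_objective \<gamma> \<phi> z y" for y
  proof (cases "\<phi> y")
    case (real b)
    have "inner v0 (y - p0) = inner (y - z) v0 + inner v0 (z - p0)"
      by (simp add: inner_diff_left inner_diff_right inner_commute)
    then have "\<gamma> * a0 + \<gamma> * inner (y - z) v0 + \<gamma> * inner v0 (z - p0) \<le> \<gamma> * b"
      using mult_left_mono[of "a0 + inner v0 (y - p0)" b \<gamma>] sub[of y] real \<gamma>
      by (simp add: distrib_left)
    moreover have "0 \<le> (norm (y - z))\<^sup>2 + 2 * (\<gamma> * inner (y - z) v0) + \<gamma>\<^sup>2 * (norm v0)\<^sup>2"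
      using norm_sq_add_eq[of "y - z" "\<gamma> *\<^sub>R v0"] zero_le_power2[of "norm ((y - z) + \<gamma> *\<^sub>R v0)"]
      by (simp add: power_mult_distrib)
    ultimately have "m \<le> \<gamma> * b + (norm (y - z))\<^sup>2 / 2"
      unfolding m_def by linarith
    then show ?thesis
      using real by (simp add: prox_objective_def)
  next
    case MInf
    then show ?thesis
      using sub[of y] by simp
  qed (use \<gamma> in \<open>simp add: prox_objective_def\<close>)
  then show ?thesis
    by blast
qed

lemma midpoint_minimizing_sequence_Cauchy:
  fixes F :: "'a::real_normed_vector \<Rightarrow> ereal"
  assumes bdd: "\<And>y. ereal m \<le> F y" and P: "\<And>n. F (P n) \<le> ereal (m + inverse (real (Suc n)))"
    and mid: "\<And>x y A B. F x = ereal A \<Longrightarrow> F y = ereal B \<Longrightarrow>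
                F ((1 / 2) *\<^sub>R (x + y)) \<le> ereal ((A + B) / 2 - (norm (x - y))\<^sup>2 / 8)"
  shows "Cauchy P"
proof -
  have "\<exists>r. F (P n) = ereal r" for n
    using bdd[of "P n"] P[of n] by (cases "F (P n)") auto
  then obtain f where f: "\<And>n. F (P n) = ereal (f n)"
    by metis
  have f_bnd: "m \<le> f n" "f n \<le> m + inverse (real (Suc n))" for n
    using bdd[of "P n"] P[of n] f[of n] by auto
  have dist: "(norm (P n - P k))\<^sup>2 \<le> 4 * (inverse (real (Suc n)) + inverse (real (Suc k)))" for n k
  proof -
    have "ereal m \<le> ereal ((f n + f k) / 2 - (norm (P n - P k))\<^sup>2 / 8)"
      using bdd mid[OF f f] by (rule order_trans)
    then have "m \<le> (f n + f k) / 2 - (norm (P n - P k))\<^sup>2 / 8"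
      by simp
    then show ?thesis
      using f_bnd[of n] f_bnd[of k] by argo
  qed
  show "Cauchy P"
  proof (rule CauchyI)
    fix e :: real
    assume e: "0 < e"
    obtain N :: nat where "8 / e\<^sup>2 < real N"
      using reals_Archimedean2 by blast
    then have N: "8 / e\<^sup>2 < real (Suc N)"
      by simp
    have "norm (P n - P k) < e" if "N \<le> n" "N \<le> k" for n k
    proof -
      have "inverse (real (Suc n)) \<le> inverse (real (Suc N))" "inverse (real (Suc k)) \<le> inverse (real (Suc N))"
        using that by (simp_all add: le_imp_inverse_le)
      moreover have "8 * inverse (real (Suc N)) < e\<^sup>2"
        using N e by (simp add: field_simps)
      ultimately have "(norm (P n - P k))\<^sup>2 < e\<^sup>2"
        using dist[of n k] by argo
      then show ?thesis
        using e by (simp add: power_less_imp_less_base)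
    qed
    then show "\<exists>N. \<forall>n\<ge>N. \<forall>k\<ge>N. norm (P n - P k) < e"
      by blast
  qed
qed

lemma closed_fun_attains_unique_min:
  fixes F :: "'a::banach \<Rightarrow> ereal"
  assumes closed: "closed_fun F" and bdd: "\<And>y. ereal m0 \<le> F y" and fin: "F p0 \<noteq> \<infinity>"
    and mid: "\<And>x y A B. F x = ereal A \<Longrightarrow> F y = ereal B \<Longrightarrow>
                F ((1 / 2) *\<^sub>R (x + y)) \<le> ereal ((A + B) / 2 - (norm (x - y))\<^sup>2 / 8)"
  shows "\<exists>!p. \<forall>y. F p \<le> F y"
proof -
  obtain m where m: "(INF y. F y) = ereal m"
    using bdd fin INF_lower[of p0 UNIV F] INF_greatest[of UNIV "ereal m0" F]
    by (cases "INF y. F y") auto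
  have Fm: "ereal m \<le> F y" for y
    using INF_lower[of y UNIV F] m by simp
  have "\<exists>p. F p < ereal (m + inverse (real (Suc n)))" for n
  proof -
    have "(INF y. F y) < ereal (m + inverse (real (Suc n)))"
      using m by simp
    then show ?thesis
      by (simp add: INF_less_iff)
  qed
  then obtain P where P: "\<And>n. F (P n) < ereal (m + inverse (real (Suc n)))"
    by metis
  have "Cauchy P"
    by (rule midpoint_minimizing_sequence_Cauchy[OF Fm less_imp_le[OF P] mid])
  then obtain p where p: "P \<longlonglongrightarrow> p"
    by (auto simp: Cauchy_convergent_iff convergent_def)
  have "(\<lambda>n. (P n, m + inverse (real (Suc n)))) \<longlonglongrightarrow> (p, m)"
    by (intro tendsto_Pair p LIMSEQ_inverse_real_of_nat_add)
  then have "(p, m) \<in> {(x, s). F x \<le> ereal s}"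
    using closed P unfolding closed_fun_def
    by (elim closed_sequentially) (auto intro: less_imp_le)
  then have Fp: "F p = ereal m"
    using Fm by (auto intro: antisym)
  have "q = p" if q_min: "\<forall>y. F q \<le> F y" for q
  proof -
    have Fq: "F q = ereal m"
      using q_min[rule_format, of p] Fm[of q] Fp by simp
    have "F q \<le> F ((1 / 2) *\<^sub>R (q + p))"
      using q_min by blast
    also have "\<dots> \<le> ereal ((m + m) / 2 - (norm (q - p))\<^sup>2 / 8)"
      by (rule mid[OF Fq Fp])
    finally show ?thesis
      using Fq by simp
  qed
  moreover have "\<forall>y. F p \<le> F y"
    using Fm Fp by simp
  ultimately show ?thesis
    by blast
qed

lemma prox_objective_unique_min:
  fixes \<phi> :: "'a::{real_inner, banach} \<Rightarrow> ereal"
  assumes cv: "convex_fun \<phi>" and cl: "closed_fun \<phi>" and v0: "v0 \<in> subdiff \<phi> p0" and \<gamma>: "\<gamma> > 0"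
  shows "\<exists>!p. \<forall>y. prox_objective \<gamma> \<phi> z p \<le> prox_objective \<gamma> \<phi> z y"
proof -
  obtain m where "\<And>y. ereal m \<le> prox_objective \<gamma> \<phi> z y"
    using prox_objective_bounded_below[OF v0 \<gamma>] by blast
  moreover have "prox_objective \<gamma> \<phi> z p0 \<noteq> \<infinity>"
    using v0 \<gamma> unfolding subdiff_def prox_objective_def by (cases "\<phi> p0") auto
  ultimately show ?thesis
    using closed_fun_prox_objective[OF cl \<gamma>] prox_objective_midpoint[OF cv \<gamma>]
    by (intro closed_fun_attains_unique_min) auto
qed

lemma prox_minimizes:
  fixes \<phi> :: "'a::{real_inner, banach} \<Rightarrow> ereal"
  assumes "convex_fun \<phi>" "closed_fun \<phi>" "v0 \<in> subdiff \<phi> p0" "\<gamma> > 0"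
  shows "prox_objective \<gamma> \<phi> z (prox \<gamma> \<phi> z) \<le> prox_objective \<gamma> \<phi> z y"
  using theI'[OF prox_objective_unique_min[OF assms]] unfolding prox_eq_The by blast

lemma prox_eqI:
  fixes \<phi> :: "'a::{real_inner, banach} \<Rightarrow> ereal"
  assumes "convex_fun \<phi>" "closed_fun \<phi>" "v0 \<in> subdiff \<phi> p0" "\<gamma> > 0"
    and "\<And>y. prox_objective \<gamma> \<phi> z p \<le> prox_objective \<gamma> \<phi> z y"
  shows "prox \<gamma> \<phi> z = p"
  unfolding prox_eq_The
  by (rule the1_equality[OF prox_objective_unique_min[OF assms(1-4)]]) (use assms(5) in blast)

lemma prox_objective_min_variational_ineq:
  fixes \<phi> :: "'a::real_inner \<Rightarrow> ereal"
  assumes cv: "convex_fun \<phi>" and \<gamma>: "\<gamma> > 0"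
    and min: "\<And>y. prox_objective \<gamma> \<phi> z p \<le> prox_objective \<gamma> \<phi> z y"
    and a: "\<phi> p = ereal a" and b: "\<phi> y = ereal b"
  shows "\<gamma> * a + inner (z - p) (y - p) \<le> \<gamma> * b"
proof -
  define N where "N = (norm (y - p))\<^sup>2 / 2"
  have "\<gamma> * a + inner (z - p) (y - p) \<le> \<gamma> * b + l * N" if l: "0 < l" "l < 1" for l
  proof -
    define yl where "yl = (1 - l) *\<^sub>R p + l *\<^sub>R y"
    have "\<phi> yl \<le> ereal ((1 - l) * a + l * b)"
      using strongly_convex_combination_le[of 0 \<phi>, OF _ a b l] cv by (simp add: yl_def)
    moreover have "\<phi> yl \<noteq> -\<infinity>"
      using min[of yl] a \<gamma> unfolding prox_objective_def by auto
    ultimately obtain c where c: "\<phi> yl = ereal c" "c \<le> (1 - l) * a + l * b"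
      by (cases "\<phi> yl") auto
    have yl_z: "yl - z = (p - z) + l *\<^sub>R (y - p)"
      by (simp add: yl_def algebra_simps)
    have "(norm (yl - z))\<^sup>2 = (norm (p - z))\<^sup>2 + 2 * l * inner (p - z) (y - p) + l * l * (2 * N)"
      unfolding yl_z norm_sq_add_eq by (simp add: N_def power_mult_distrib power2_eq_square)
    moreover have "\<gamma> * a + (norm (p - z))\<^sup>2 / 2 \<le> \<gamma> * c + (norm (yl - z))\<^sup>2 / 2"
      using min[of yl] a c by (simp add: prox_objective_def)
    moreover have "\<gamma> * c \<le> \<gamma> * a + l * (\<gamma> * b - \<gamma> * a)"
      using mult_left_mono[OF c(2), of \<gamma>] \<gamma> by (simp add: algebra_simps)
    ultimately have "l * (\<gamma> * a + inner (z - p) (y - p)) \<le> l * (\<gamma> * b + l * N)"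
      by (simp add: algebra_simps inner_diff_left inner_commute)
    then show ?thesis
      using l by simp
  qed
  then show ?thesis
    by (rule le_of_forall_le_add_scaled)
qed

lemma prox_subdiff:
  fixes \<phi> :: "'a::{real_inner, banach} \<Rightarrow> ereal"
  assumes cv: "convex_fun \<phi>" and cl: "closed_fun \<phi>" and v0: "v0 \<in> subdiff \<phi> p0" and \<gamma>: "\<gamma> > 0"
  shows "(1 / \<gamma>) *\<^sub>R (z - prox \<gamma> \<phi> z) \<in> subdiff \<phi> (prox \<gamma> \<phi> z)"
proof -
  define p where "p = prox \<gamma> \<phi> z"
  have min: "prox_objective \<gamma> \<phi> z p \<le> prox_objective \<gamma> \<phi> z y" for y
    unfolding p_def by (rule prox_minimizes[OF cv cl v0 \<gamma>])
  obtain m where m: "\<And>y. ereal m \<le> prox_objective \<gamma> \<phi> z y"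
    using prox_objective_bounded_below[OF v0 \<gamma>] by blast
  have "prox_objective \<gamma> \<phi> z p0 \<noteq> \<infinity>"
    using v0 \<gamma> unfolding subdiff_def prox_objective_def by (cases "\<phi> p0") auto
  then obtain A where "prox_objective \<gamma> \<phi> z p = ereal A"
    using min[of p0] m[of p] by (cases "prox_objective \<gamma> \<phi> z p") auto
  then obtain a where a: "\<phi> p = ereal a"
    using prox_objective_eq_ereal[OF \<gamma>] by blast
  have "\<phi> p + ereal (inner ((1 / \<gamma>) *\<^sub>R (z - p)) (y - p)) \<le> \<phi> y" for y
  proof (cases "\<phi> y")
    case (real b)
    have "\<gamma> * a + inner (z - p) (y - p) \<le> \<gamma> * b"
      using prox_objective_min_variational_ineq[OF cv \<gamma> min a real] .
    then have "a + inner ((1 / \<gamma>) *\<^sub>R (z - p)) (y - p) \<le> b"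
      using \<gamma> unfolding inner_scaleR_left by (simp add: field_simps)
    then show ?thesis
      using a real by simp
  next
    case MInf
    then show ?thesis
      using min[of y] a \<gamma> unfolding prox_objective_def by auto
  qed simp
  then show ?thesis
    unfolding p_def[symmetric] subdiff_def using a by auto
qed

lemma prox_eqI_subdiff:
  fixes \<phi> :: "'a::{real_inner, banach} \<Rightarrow> ereal"
  assumes cv: "convex_fun \<phi>" and cl: "closed_fun \<phi>" and v0: "v0 \<in> subdiff \<phi> p0" and \<gamma>: "\<gamma> > 0"
    and v: "(1 / \<gamma>) *\<^sub>R (z - p) \<in> subdiff \<phi> p"
  shows "prox \<gamma> \<phi> z = p"
proof (rule prox_eqI[OF cv cl v0 \<gamma>])
  fix y
  obtain a where a: "\<phi> p = ereal a"
    using v unfolding subdiff_def by (cases "\<phi> p") auto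
  have sub: "\<phi> p + ereal (inner ((1 / \<gamma>) *\<^sub>R (z - p)) (y - p)) \<le> \<phi> y"
    using v unfolding subdiff_def by blast
  have "y - z = (p - z) + (y - p)"
    by simp
  then have sq: "(norm (y - z))\<^sup>2 = (norm (p - z))\<^sup>2 + 2 * inner (p - z) (y - p) + (norm (y - p))\<^sup>2"
    by (metis norm_sq_add_eq)
  show "prox_objective \<gamma> \<phi> z p \<le> prox_objective \<gamma> \<phi> z y"
  proof (cases "\<phi> y")
    case (real b)
    have "a + inner ((1 / \<gamma>) *\<^sub>R (z - p)) (y - p) \<le> b"
      using sub a real by simp
    then have "\<gamma> * a + inner (z - p) (y - p) \<le> \<gamma> * b"
      using \<gamma> unfolding inner_scaleR_left by (simp add: field_simps)
    moreover have "inner (z - p) (y - p) = - inner (p - z) (y - p)"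
      by (simp add: inner_diff_left)
    ultimately have "\<gamma> * a + (norm (p - z))\<^sup>2 / 2 \<le> \<gamma> * b + (norm (y - z))\<^sup>2 / 2"
      using sq zero_le_power2[of "norm (y - p)"] by argo
    then show ?thesis
      using a real unfolding prox_objective_def by simp
  next
    case PInf
    then show ?thesis
      using \<gamma> unfolding prox_objective_def by simp
  next
    case MInf
    then show ?thesis
      using sub a by simp
  qed
qed

lemma prox_strongly_monotone:
  fixes \<phi> :: "'a::{real_inner, banach} \<Rightarrow> ereal"
  assumes sc: "strongly_convex \<mu> \<phi>" and \<mu>: "\<mu> \<ge> 0" and cl: "closed_fun \<phi>"
    and v0: "v0 \<in> subdiff \<phi> p0" and \<gamma>: "\<gamma> > 0"
  shows "\<gamma> * \<mu> * (norm (prox \<gamma> \<phi> z1 - prox \<gamma> \<phi> z2))\<^sup>2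
           \<le> inner ((z1 - prox \<gamma> \<phi> z1) - (z2 - prox \<gamma> \<phi> z2)) (prox \<gamma> \<phi> z1 - prox \<gamma> \<phi> z2)"
proof -
  note sd = prox_subdiff[OF strongly_convex_imp_convex_fun[OF sc \<mu>] cl v0 \<gamma>]
  define p1 p2 where "p1 = prox \<gamma> \<phi> z1" and "p2 = prox \<gamma> \<phi> z2"
  have "\<mu> * (norm (p1 - p2))\<^sup>2 \<le> inner ((1 / \<gamma>) *\<^sub>R (z1 - p1) - (1 / \<gamma>) *\<^sub>R (z2 - p2)) (p1 - p2)"
    unfolding p1_def p2_def by (rule subdiff_strongly_monotone[OF sc sd sd])
  also have "\<dots> = inner ((z1 - p1) - (z2 - p2)) (p1 - p2) / \<gamma>"
    by (simp only: scaleR_diff_right[symmetric] inner_scaleR_left) simp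
  finally show ?thesis
    unfolding p1_def[symmetric] p2_def[symmetric] using \<gamma> by (simp add: field_simps)
qed

lemma prox_nonexpansive:
  fixes \<phi> :: "'a::{real_inner, banach} \<Rightarrow> ereal"
  assumes cv: "convex_fun \<phi>" and cl: "closed_fun \<phi>" and v0: "v0 \<in> subdiff \<phi> p0" and \<gamma>: "\<gamma> > 0"
  shows "norm (prox \<gamma> \<phi> z1 - prox \<gamma> \<phi> z2) \<le> norm (z1 - z2)"
proof -
  define \<delta> where "\<delta> = prox \<gamma> \<phi> z1 - prox \<gamma> \<phi> z2"
  have "0 \<le> inner ((z1 - z2) - \<delta>) \<delta>"
    using prox_strongly_monotone[of 0 \<phi>, OF _ _ cl v0 \<gamma>, of z1 z2] cv
    unfolding \<delta>_def by (simp add: algebra_simps)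
  then have "norm \<delta> * norm \<delta> \<le> norm (z1 - z2) * norm \<delta>"
    using norm_cauchy_schwarz[of "z1 - z2" \<delta>]
    by (simp add: inner_diff_left power2_norm_eq_inner[symmetric] power2_eq_square)
  then show ?thesis
    unfolding \<delta>_def[symmetric]
    by (cases "\<delta> = 0") auto
qed

lemma continuous_on_prox:
  fixes \<phi> :: "'a::{real_inner, banach} \<Rightarrow> ereal"
  assumes "convex_fun \<phi>" "closed_fun \<phi>" "v0 \<in> subdiff \<phi> p0" "\<gamma> > 0"
  shows "continuous_on UNIV (prox \<gamma> \<phi>)"
  by (rule lipschitz_on_continuous_on[of 1])
    (auto intro!: lipschitz_onI simp: dist_norm prox_nonexpansive[OF assms])

section \<open>Fenchel conjugates and saddle points\<close>

lemma conj_fun_ge: "ereal (inner v y) - \<phi> y \<le> conj_fun \<phi> v"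
  unfolding conj_fun_def by (rule SUP_upper) simp

lemma conj_fun_le:
  assumes "\<And>y t. \<phi> y \<le> ereal t \<Longrightarrow> inner v y - t \<le> c" and "\<And>y. \<phi> y \<noteq> -\<infinity>"
  shows "conj_fun \<phi> v \<le> ereal c"
  unfolding conj_fun_def
proof (rule SUP_least)
  fix y
  show "ereal (inner v y) - \<phi> y \<le> ereal c"
  proof (cases "\<phi> y")
    case (real t)
    then show ?thesis
      using assms(1)[of y t] by simp
  qed (use assms(2)[of y] in auto)
qed

lemma conj_fun_eq_of_subdiff:
  assumes v: "v \<in> subdiff \<phi> p" and a: "\<phi> p = ereal a"
  shows "conj_fun \<phi> v = ereal (inner v p - a)"
proof (rule antisym)
  have sub: "ereal (a + inner v (y - p)) \<le> \<phi> y" for y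
    using v a unfolding subdiff_def by auto
  show "conj_fun \<phi> v \<le> ereal (inner v p - a)"
  proof (rule conj_fun_le)
    fix y t
    assume "\<phi> y \<le> ereal t"
    with sub[of y] have "ereal (a + inner v (y - p)) \<le> ereal t"
      by (rule order_trans)
    then have "a + inner v (y - p) \<le> t"
      by simp
    then show "inner v y - t \<le> inner v p - a"
      unfolding inner_diff_right by argo
  next
    show "\<phi> y \<noteq> -\<infinity>" for y
      using sub[of y] by auto
  qed
  show "ereal (inner v p - a) \<le> conj_fun \<phi> v"
    using conj_fun_ge[of v p \<phi>] a by simp
qed

lemma closed_fun_conj_fun: "closed_fun (conj_fun \<phi>)"
proof -
  have epi: "{(v, s). conj_fun \<phi> v \<le> ereal s} = (\<Inter>y. {(v, s). ereal (inner v y) - \<phi> y \<le> ereal s})"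
    unfolding conj_fun_def by (auto simp: SUP_le_iff)
  have "closed {(v, s::real). ereal (inner v y) - \<phi> y \<le> ereal s}" for y
  proof (cases "\<phi> y")
    case (real c)
    then have "{(v, s::real). ereal (inner v y) - \<phi> y \<le> ereal s} = {p. inner (fst p) y - c \<le> snd p}"
      by auto
    then show ?thesis
      by (simp add: closed_Collect_le continuous_intros)
  qed auto
  then show ?thesis
    unfolding closed_fun_def epi by (intro closed_INT) auto
qed

lemma convex_epigraph:
  fixes \<phi> :: "'a::real_vector \<Rightarrow> ereal"
  assumes cv: "convex_fun \<phi>"
  shows "convex {(x, s::real). \<phi> x \<le> ereal s}"
  unfolding convex_def
proof (intro ballI allI impI)
  fix X Y :: "'a \<times> real" and u v :: real
  assume X: "X \<in> {(x, s). \<phi> x \<le> ereal s}" and Y: "Y \<in> {(x, s). \<phi> x \<le> ereal s}"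
    and uv: "0 \<le> u" "0 \<le> v" "u + v = 1"
  obtain x s y t where xs: "X = (x, s)" "\<phi> x \<le> ereal s" and yt: "Y = (y, t)" "\<phi> y \<le> ereal t"
    using X Y by auto
  have u: "u = 1 - v"
    using uv by simp
  consider "v = 0" | "v = 1" | "0 < v" "v < 1"
    using uv by fastforce
  then show "u *\<^sub>R X + v *\<^sub>R Y \<in> {(x, s). \<phi> x \<le> ereal s}"
  proof cases
    case 1
    then show ?thesis
      using xs u by simp
  next
    case 2
    then show ?thesis
      using yt u by simp
  next
    case 3
    have "\<phi> ((1 - v) *\<^sub>R x + v *\<^sub>R y) \<le> ereal (1 - v) * \<phi> x + ereal v * \<phi> y"
      using cv 3 unfolding convex_fun_def by blast
    also have "\<dots> \<le> ereal (1 - v) * ereal s + ereal v * ereal t"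
      using 3 xs yt by (intro add_mono ereal_mult_left_mono) auto
    finally show ?thesis
      using xs yt u by simp
  qed
qed

lemma separation_slope_nonneg:
  assumes pr: "proper_fun h" and sep: "\<And>y t. h y \<le> ereal t \<Longrightarrow> b < inner w y + s * t"
  shows "0 \<le> s"
proof (rule ccontr)
  assume "\<not> 0 \<le> s"
  obtain x1 where "h x1 \<noteq> \<infinity>" "h x1 \<noteq> -\<infinity>"
    using pr unfolding proper_fun_def by auto
  then obtain t1 where t1: "h x1 = ereal t1"
    by (cases "h x1") auto
  define t where "t = max t1 ((inner w x1 - b) / (- s))"
  have "b < inner w x1 + s * t"
    using t1 by (intro sep) (simp add: t_def)
  moreover have "s * t \<le> s * ((inner w x1 - b) / (- s))"
    using \<open>\<not> 0 \<le> s\<close> by (intro mult_left_mono_neg) (auto simp: t_def)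
  moreover have "s * ((inner w x1 - b) / (- s)) = b - inner w x1"
    using \<open>\<not> 0 \<le> s\<close> by (simp add: field_simps)
  ultimately show False
    by argo
qed

lemma conj_fun_le_of_separation:
  assumes nm: "\<And>y. h y \<noteq> -\<infinity>" and s: "s > 0"
    and sep: "\<And>y t. h y \<le> ereal t \<Longrightarrow> b < inner w y + s * t"
  shows "conj_fun h ((- 1 / s) *\<^sub>R w) \<le> ereal (- b / s)"
proof (rule conj_fun_le[OF _ nm])
  fix y t
  assume "h y \<le> ereal t"
  then have "b < inner w y + s * t"
    by (rule sep)
  have "inner ((- 1 / s) *\<^sub>R w) y - t = - (inner w y + s * t) / s"
    using s by (simp add: field_simps)
  also have "\<dots> \<le> - b / s"
    using s \<open>b < inner w y + s * t\<close> by (intro divide_right_mono) auto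
  finally show "inner ((- 1 / s) *\<^sub>R w) y - t \<le> - b / s" .
qed

lemma conj_fun_shift_le_of_separation:
  assumes nm: "\<And>y. h y \<noteq> -\<infinity>" and c: "conj_fun h v = ereal c"
    and sep: "\<And>y t. h y \<le> ereal t \<Longrightarrow> b < inner w y"
  shows "conj_fun h (v - w) \<le> ereal (c - b)"
proof (rule conj_fun_le[OF _ nm])
  fix y t
  assume le: "h y \<le> ereal t"
  have "ereal (inner v y) - ereal t \<le> conj_fun h v"
    using order_trans[OF ereal_minus_mono[OF order_refl le] conj_fun_ge[of v y h]] .
  then show "inner (v - w) y - t \<le> c - b"
    using c sep[OF le] by (simp add: inner_diff_left)
qed

lemma subdiff_conj_fun_le:
  fixes h :: "'a::euclidean_space \<Rightarrow> ereal"
  assumes pr: "proper_fun h" and cl: "closed_fun h" and cv: "convex_fun h"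
    and z: "z \<in> subdiff (conj_fun h) u0"
  shows "h z \<le> ereal (inner u0 z) - conj_fun h u0"
proof (rule ccontr)
  assume not_le: "\<not> ?thesis"
  obtain c0 where c0: "conj_fun h u0 = ereal c0"
    using z unfolding subdiff_def by (cases "conj_fun h u0") auto
  have sub: "ereal (c0 + inner z (v - u0)) \<le> conj_fun h v" for v
    using z c0 unfolding subdiff_def by auto
  have nm: "h y \<noteq> -\<infinity>" for y
    using pr unfolding proper_fun_def by auto
  define S where "S = {(x, s::real). h x \<le> ereal s}"
  have "(z, inner u0 z - c0) \<notin> S"
    using not_le c0 unfolding S_def by auto
  moreover have "convex S" "closed S"
    using convex_epigraph[OF cv] cl unfolding S_def closed_fun_def by auto
  ultimately obtain a b where ab: "inner a (z, inner u0 z - c0) < b" "\<forall>x\<in>S. b < inner a x"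
    using separating_hyperplane_closed_point by blast
  obtain w s where a: "a = (w, s)"
    by (cases a)
  have sep_z: "inner w z + s * (inner u0 z - c0) < b"
    using ab(1) a by (simp add: inner_Pair)
  have sep_S: "b < inner w y + s * t" if "h y \<le> ereal t" for y t
    using ab(2) that a unfolding S_def by (auto simp: inner_Pair)
  consider "s > 0" | "s = 0"
    using separation_slope_nonneg[OF pr sep_S] by linarith
  then show False
  proof cases
    case 1
    have "ereal (c0 + inner z ((- 1 / s) *\<^sub>R w - u0)) \<le> ereal (- b / s)"
      using sub[of "(- 1 / s) *\<^sub>R w"] conj_fun_le_of_separation[OF nm 1 sep_S] by (rule order_trans)
    then have "s * (c0 - inner w z / s - inner u0 z) \<le> s * (- b / s)"
      using 1 by (intro mult_left_mono) (auto simp: inner_diff_right inner_commute)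
    then have "s * c0 - inner w z - s * inner u0 z \<le> - b"
      using 1 by (simp add: right_diff_distrib)
    then show False
      using sep_z by (simp add: right_diff_distrib)
  next
    case 2
    have sep0: "b < inner w y" if "h y \<le> ereal t" for y t
      using sep_S[OF that] 2 by simp
    have "ereal (c0 + inner z (u0 - w - u0)) \<le> ereal (c0 - b)"
      using sub[of "u0 - w"] conj_fun_shift_le_of_separation[OF nm c0 sep0] by (rule order_trans)
    then have "c0 + inner z (- w) \<le> c0 - b"
      by simp
    then show False
      using sep_z 2 by (simp add: inner_commute)
  qed
qed

lemma dual_minimizer_unique:
  fixes K :: "'x::real_inner \<Rightarrow> 'u::real_inner"
  assumes sc: "strongly_convex \<mu> (conj_fun h)" and \<mu>: "\<mu> > 0"
    and adj: "\<And>x u. inner (K x) u = inner x (K' u)"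
    and xa: "- K' ua \<in> subdiff g xa" and ua: "K xa \<in> subdiff (conj_fun h) ua"
    and min: "conj_fun g (- K' us) + conj_fun h us \<le> conj_fun g (- K' ua) + conj_fun h ua"
  shows "us = ua"
proof -
  obtain ga where ga: "g xa = ereal ga"
    using xa unfolding subdiff_def by (cases "g xa") auto
  obtain ha where ha: "conj_fun h ua = ereal ha"
    using ua unfolding subdiff_def by (cases "conj_fun h ua") auto
  define N where "N = \<mu> / 2 * (norm (us - ua))\<^sup>2"
  define D where "D = inner (- K' ua) xa - ga + ha"
  have "ereal (inner (- K' us) xa - ga) \<le> conj_fun g (- K' us)"
    using conj_fun_ge[of "- K' us" xa g] ga by simp
  moreover have "ereal (ha + (inner xa (K' us) - inner xa (K' ua) + N)) \<le> conj_fun h us"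
    using strongly_convex_subdiff_growth[OF sc ua, of us] ha adj[of xa us] adj[of xa ua]
    by (simp add: N_def inner_diff_right)
  ultimately have "ereal (inner (- K' us) xa - ga) + ereal (ha + (inner xa (K' us) - inner xa (K' ua) + N))
      \<le> conj_fun g (- K' us) + conj_fun h us"
    by (rule add_mono)
  also have "\<dots> \<le> ereal D"
    using min conj_fun_eq_of_subdiff[OF xa ga] ha by (simp add: D_def)
  finally have "N \<le> 0"
    by (simp add: D_def inner_commute)
  then show ?thesis
    using \<mu> by (simp add: N_def mult_le_0_iff)
qed

lemma primal_minimizer_unique:
  fixes K :: "'x::real_inner \<Rightarrow> 'u::euclidean_space"
  assumes sc: "strongly_convex \<mu> g" and \<mu>: "\<mu> > 0"
    and h: "proper_fun h" "closed_fun h" "convex_fun h"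
    and adj: "\<And>x u. inner (K x) u = inner x (K' u)"
    and xa: "- K' ua \<in> subdiff g xa" and ua: "K xa \<in> subdiff (conj_fun h) ua"
    and min: "g xs + h (K xs) \<le> g xa + h (K xa)"
  shows "xs = xa"
proof -
  obtain ga where ga: "g xa = ereal ga"
    using xa unfolding subdiff_def by (cases "g xa") auto
  obtain ha where ha: "conj_fun h ua = ereal ha"
    using ua unfolding subdiff_def by (cases "conj_fun h ua") auto
  have K_ua: "inner ua (K y) = inner y (K' ua)" for y
    by (metis adj inner_commute)
  define N where "N = \<mu> / 2 * (norm (xs - xa))\<^sup>2"
  have "ereal (inner xs (K' ua) - ha) \<le> h (K xs)"
  proof -
    have "ereal (inner ua (K xs)) - h (K xs) \<le> ereal ha"
      using conj_fun_ge[of ua "K xs" h] ha by simp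
    moreover have "h (K xs) \<noteq> -\<infinity>"
      using h(1) unfolding proper_fun_def by auto
    ultimately show ?thesis
      unfolding K_ua by (cases "h (K xs)") auto
  qed
  with strongly_convex_subdiff_growth[OF sc xa, of xs]
  have "ereal (ga + (inner (- K' ua) (xs - xa) + N)) + ereal (inner xs (K' ua) - ha) \<le> g xs + h (K xs)"
    using ga by (intro add_mono) (simp_all add: N_def)
  also have "\<dots> \<le> g xa + h (K xa)"
    by (rule min)
  also have "\<dots> \<le> ereal ga + ereal (inner xa (K' ua) - ha)"
    using subdiff_conj_fun_le[OF h ua] ga ha by (intro add_mono) (simp_all add: K_ua)
  finally have "N \<le> 0"
    by (simp add: inner_diff_right inner_commute)
  then show ?thesis
    using \<mu> by (simp add: N_def mult_le_0_iff)
qed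

section \<open>Filtrations and conditional expectations\<close>

lemma abs_inner_Basis_mult_le:
  fixes y v :: "'a::euclidean_space"
  assumes b: "b \<in> Basis"
  shows "\<bar>inner y b * inner b v\<bar> \<le> (norm y)\<^sup>2 + (norm v)\<^sup>2"
proof -
  have "\<bar>inner y b * inner b v\<bar> \<le> norm y * norm v"
    using Basis_le_norm[OF b, of y] Basis_le_norm[OF b, of v]
    by (simp add: abs_mult inner_commute mult_mono)
  also have "\<dots> \<le> (norm y)\<^sup>2 + (norm v)\<^sup>2"
  proof -
    have "2 * (norm y * norm v) \<le> (norm y)\<^sup>2 + (norm v)\<^sup>2"
      using sum_squares_bound[of "norm y" "norm v"] by (simp add: mult.assoc)
    moreover have "0 \<le> norm y * norm v"
      by simp
    ultimately show ?thesis
      by linarith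
  qed
  finally show ?thesis .
qed

lemma space_gen_filtration [simp]: "space (gen_filtration M x u t) = space M"
  unfolding gen_filtration_def by (rule space_measure_of) auto

lemma sets_gen_filtration:
  "sets (gen_filtration M x u t) = sigma_sets (space M)
     ((\<Union>s\<le>t. {x s -` A \<inter> space M | A. A \<in> sets borel})
      \<union> (\<Union>s\<le>t. {u s -` B \<inter> space M | B. B \<in> sets borel}))"
  unfolding gen_filtration_def by (rule sets_measure_of) auto

lemma measurable_gen_filtration_fst:
  "s \<le> t \<Longrightarrow> x s \<in> borel_measurable (gen_filtration M x u t)"
  by (rule measurableI) (auto simp: sets_gen_filtration intro!: sigma_sets.Basic)

lemma measurable_gen_filtration_snd:
  "s \<le> t \<Longrightarrow> u s \<in> borel_measurable (gen_filtration M x u t)"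
  by (rule measurableI) (auto simp: sets_gen_filtration intro!: sigma_sets.Basic)

lemma subalgebra_gen_filtration:
  assumes "\<And>s. x s \<in> borel_measurable M" and "\<And>s. u s \<in> borel_measurable M"
  shows "subalgebra M (gen_filtration M x u t)"
  unfolding subalgebra_def using assms
  by (auto simp: sets_gen_filtration intro!: sets.sigma_sets_subset)

lemma (in prob_space) sigma_finite_subalgebra_gen_filtration:
  assumes "\<And>s. x s \<in> borel_measurable M" and "\<And>s. u s \<in> borel_measurable M"
  shows "sigma_finite_subalgebra M (gen_filtration M x u t)"
proof -
  interpret finite_measure_subalgebra M "gen_filtration M x u t"
    by unfold_locales (rule subalgebra_gen_filtration[OF assms])
  show ?thesis
    by unfold_locales
qed

lemma (in sigma_finite_subalgebra) integral_le_of_nn_cond_exp_le: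
  fixes f G :: "'a \<Rightarrow> real"
  assumes f: "f \<in> borel_measurable M" "\<And>w. 0 \<le> f w"
    and G: "integrable M G" "AE w in M. 0 \<le> G w"
    and le: "AE w in M. nn_cond_exp M F (\<lambda>w. ennreal (f w)) w \<le> ennreal (G w)"
  shows "integrable M f" and "(\<integral>w. f w \<partial>M) \<le> (\<integral>w. G w \<partial>M)"
proof -
  have "(\<integral>\<^sup>+w. ennreal (f w) \<partial>M) = (\<integral>\<^sup>+w. nn_cond_exp M F (\<lambda>w. ennreal (f w)) w \<partial>M)"
    using nn_cond_exp_intg[of "\<lambda>_. 1" "\<lambda>w. ennreal (f w)"] f(1) by simp
  also have "\<dots> \<le> (\<integral>\<^sup>+w. ennreal (G w) \<partial>M)"
    using le by (rule nn_integral_mono_AE)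
  also have "\<dots> = ennreal (\<integral>w. G w \<partial>M)"
    by (rule nn_integral_eq_integral[OF G])
  finally have nn: "(\<integral>\<^sup>+w. ennreal (f w) \<partial>M) \<le> ennreal (\<integral>w. G w \<partial>M)" .
  show int: "integrable M f"
    using f nn by (intro integrableI_nonneg) (auto simp: top.not_eq_extremum intro: le_less_trans)
  have "ennreal (\<integral>w. f w \<partial>M) \<le> ennreal (\<integral>w. G w \<partial>M)"
    using nn nn_integral_eq_integral[OF int] f(2) by simp
  moreover have "0 \<le> (\<integral>w. G w \<partial>M)"
    using G(2) by (rule integral_nonneg_AE)
  ultimately show "(\<integral>w. f w \<partial>M) \<le> (\<integral>w. G w \<partial>M)"
    by simp
qed

lemma (in sigma_finite_subalgebra) integral_mult_cond_exp_eq: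
  fixes f g h :: "'a \<Rightarrow> real"
  assumes int: "integrable M (\<lambda>w. f w * g w)" and f: "f \<in> borel_measurable F"
    and g: "g \<in> borel_measurable M" and h: "h \<in> borel_measurable M"
    and cond: "AE w in M. real_cond_exp M F g w = h w"
  shows "(\<integral>w. f w * g w \<partial>M) = (\<integral>w. f w * h w \<partial>M)"
proof -
  have f_M: "f \<in> borel_measurable M"
    using measurable_from_subalg[OF subalg f] .
  have "(\<integral>w. f w * g w \<partial>M) = (\<integral>w. f w * real_cond_exp M F g w \<partial>M)"
    by (rule real_cond_exp_intg(2)[OF int f g, symmetric])
  also have "\<dots> = (\<integral>w. f w * h w \<partial>M)"
    using f_M h cond by (intro integral_cong_AE) auto
  finally show ?thesis .
qed

lemma (in sigma_finite_subalgebra) integral_inner_cond_centered_eq_0: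
  fixes Y D r :: "'a \<Rightarrow> 'b::euclidean_space"
  assumes Y: "Y \<in> borel_measurable F" and D: "D \<in> borel_measurable M" and r: "r \<in> borel_measurable M"
    and mean: "\<And>v. AE w in M. real_cond_exp M F (\<lambda>w. inner v (D w)) w = inner v (r w)"
    and iY: "integrable M (\<lambda>w. (norm (Y w))\<^sup>2)" and iD: "integrable M (\<lambda>w. (norm (D w))\<^sup>2)"
    and ir: "integrable M (\<lambda>w. (norm (r w))\<^sup>2)"
  shows "integrable M (\<lambda>w. inner (Y w) (D w - r w))" and "(\<integral>w. inner (Y w) (D w - r w) \<partial>M) = 0"
proof -
  have Y_M: "Y \<in> borel_measurable M"
    using measurable_from_subalg[OF subalg Y] .
  have int: "integrable M (\<lambda>w. inner (Y w) b * inner b (V w))"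
    if b: "b \<in> Basis" and V: "V \<in> borel_measurable M" "integrable M (\<lambda>w. (norm (V w))\<^sup>2)" for b V
  proof (rule Bochner_Integration.integrable_bound)
    show "integrable M (\<lambda>w. (norm (Y w))\<^sup>2 + (norm (V w))\<^sup>2)"
      using iY V(2) by simp
    show "(\<lambda>w. inner (Y w) b * inner b (V w)) \<in> borel_measurable M"
      by (intro borel_measurable_times borel_measurable_inner measurable_const Y_M V(1)) simp_all
    show "AE w in M. norm (inner (Y w) b * inner b (V w)) \<le> norm ((norm (Y w))\<^sup>2 + (norm (V w))\<^sup>2)"
      using abs_inner_Basis_mult_le[OF b] by (intro AE_I2) simp
  qed
  have same_mean: "(\<integral>w. inner (Y w) b * inner b (D w) \<partial>M) = (\<integral>w. inner (Y w) b * inner b (r w) \<partial>M)"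
    if b: "b \<in> Basis" for b
  proof -
    have "(\<lambda>w. inner (Y w) b) \<in> borel_measurable F"
      by (intro borel_measurable_inner measurable_const Y) simp_all
    moreover have "(\<lambda>w. inner b (D w)) \<in> borel_measurable M" "(\<lambda>w. inner b (r w)) \<in> borel_measurable M"
      by (intro borel_measurable_inner measurable_const D r; simp)+
    ultimately show ?thesis
      by (rule integral_mult_cond_exp_eq[OF int[OF b D iD] _ _ _ mean])
  qed
  have split: "inner (Y w) (D w - r w)
      = (\<Sum>b\<in>Basis. inner (Y w) b * inner b (D w) - inner (Y w) b * inner b (r w))" for w
    unfolding euclidean_inner[of "Y w" "D w - r w"]
    by (simp add: inner_diff_left inner_diff_right inner_commute right_diff_distrib)
  show "integrable M (\<lambda>w. inner (Y w) (D w - r w))"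
    unfolding split using int D iD r ir
    by (intro Bochner_Integration.integrable_sum Bochner_Integration.integrable_diff) auto
  show "(\<integral>w. inner (Y w) (D w - r w) \<partial>M) = 0"
    unfolding split using int D iD r ir same_mean
    by (subst Bochner_Integration.integral_sum) (auto intro: Bochner_Integration.integrable_diff)
qed

lemma AE_tendsto_zero_of_summable_nn_integral:
  fixes f :: "nat \<Rightarrow> 'a \<Rightarrow> real"
  assumes meas: "\<And>t. f t \<in> borel_measurable M" and nn: "\<And>t w. 0 \<le> f t w"
    and bound: "\<And>t. (\<integral>\<^sup>+w. ennreal (f t w) \<partial>M) \<le> ennreal (B t)"
    and B: "summable B" "\<And>t. 0 \<le> B t"
  shows "AE w in M. (\<lambda>t. f t w) \<longlonglongrightarrow> 0"
proof -
  have "(\<integral>\<^sup>+w. (\<Sum>t. ennreal (f t w)) \<partial>M) = (\<Sum>t. \<integral>\<^sup>+w. ennreal (f t w) \<partial>M)"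
    using meas by (intro nn_integral_suminf) auto
  also have "\<dots> \<le> (\<Sum>t. ennreal (B t))"
    by (intro suminf_le summableI bound)
  also have "\<dots> = ennreal (\<Sum>t. B t)"
    using B by (intro suminf_ennreal2) auto
  finally have "(\<integral>\<^sup>+w. (\<Sum>t. ennreal (f t w)) \<partial>M) \<noteq> \<infinity>"
    using neq_top_trans[OF ennreal_neq_top] by simp
  then have "AE w in M. (\<Sum>t. ennreal (f t w)) \<noteq> \<infinity>"
    using meas by (intro nn_integral_PInf_AE) auto
  then show ?thesis
  proof (rule AE_mp, intro AE_I2 impI)
    fix w
    assume "(\<Sum>t. ennreal (f t w)) \<noteq> \<infinity>"
    then have "summable (\<lambda>t. f t w)"
      using nn by (intro summable_suminf_not_top) auto
    then show "(\<lambda>t. f t w) \<longlonglongrightarrow> 0"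
      by (rule summable_LIMSEQ_zero)
  qed
qed

lemma integrable_real_bound:
  fixes f g :: "'a \<Rightarrow> real"
  assumes "g \<in> borel_measurable M" "integrable M f" "\<And>w. 0 \<le> g w" "AE w in M. g w \<le> f w"
  shows "integrable M g"
  using assms(2,1)
proof (rule Bochner_Integration.integrable_bound)
  show "AE w in M. norm (g w) \<le> norm (f w)"
    using assms(4) by eventually_elim (use assms(3) in \<open>simp add: abs_of_nonneg\<close>)
qed

lemma tendsto_of_norm_sq_le:
  fixes f :: "nat \<Rightarrow> 'a::real_normed_vector"
  assumes le: "\<And>t. (norm (f t - l))\<^sup>2 \<le> c * g t" and g: "g \<longlonglongrightarrow> 0"
  shows "f \<longlonglongrightarrow> l"
proof -
  have "\<forall>\<^sub>F t in sequentially. norm ((norm (f t - l))\<^sup>2) \<le> c * g t"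
    using le by (intro always_eventually allI) simp
  moreover have "(\<lambda>t. c * g t) \<longlonglongrightarrow> 0"
    using tendsto_mult[OF tendsto_const[of c] g] by simp
  ultimately have "(\<lambda>t. (norm (f t - l))\<^sup>2) \<longlonglongrightarrow> 0"
    by (rule Lim_null_comparison)
  then have "(\<lambda>t. sqrt ((norm (f t - l))\<^sup>2)) \<longlonglongrightarrow> 0"
    using tendsto_real_sqrt by fastforce
  then show ?thesis
    by (simp add: LIM_zero_iff tendsto_norm_zero_iff)
qed

section \<open>One step of RandProx-CP\<close>

lemma primal_prox_descent:
  fixes e q v :: "'a::real_inner"
  assumes \<gamma>: "\<gamma> > 0" and \<mu>: "\<mu> \<ge> 0"
    and mono: "\<gamma> * \<mu> * (norm q)\<^sup>2 \<le> inner ((e - \<gamma> *\<^sub>R v) - q) q"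
  shows "(norm q)\<^sup>2 / \<gamma> + 2 * inner q v \<le> (norm e)\<^sup>2 / (\<gamma> * (1 + 2 * \<gamma> * \<mu>))"
proof -
  define m where "m = 1 + 2 * \<gamma> * \<mu>"
  have m: "m > 0"
    using \<gamma> \<mu> by (simp add: m_def add_pos_nonneg)
  have "inner ((e - \<gamma> *\<^sub>R v) - q) q = inner e q - \<gamma> * inner q v - (norm q)\<^sup>2"
    by (simp add: inner_diff_left power2_norm_eq_inner inner_commute[of v q])
  then have "(norm q)\<^sup>2 + 2 * (\<gamma> * inner q v) \<le> 2 * inner e q - m * (norm q)\<^sup>2"
    using mono unfolding m_def by (simp add: algebra_simps)
  also have "\<dots> \<le> (norm e)\<^sup>2 / m"
  proof -
    have "(2 * inner e q - m * (norm q)\<^sup>2) * m + (norm (m *\<^sub>R q - e))\<^sup>2 = (norm e)\<^sup>2"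
      unfolding norm_sq_diff_eq by (simp add: power_mult_distrib inner_commute[of q e] algebra_simps power2_eq_square)
    then have "(2 * inner e q - m * (norm q)\<^sup>2) * m \<le> (norm e)\<^sup>2"
      using zero_le_power2[of "norm (m *\<^sub>R q - e)"] by linarith
    then show ?thesis
      using m by (simp add: pos_le_divide_eq)
  qed
  finally have "((norm q)\<^sup>2 + 2 * (\<gamma> * inner q v)) / \<gamma> \<le> (norm e)\<^sup>2 / m / \<gamma>"
    using \<gamma> by (intro divide_right_mono) auto
  moreover have "((norm q)\<^sup>2 + 2 * (\<gamma> * inner q v)) / \<gamma> = (norm q)\<^sup>2 / \<gamma> + 2 * inner q v"
    using \<gamma> by (simp add: field_simps)
  ultimately show ?thesis
    unfolding m_def by (simp add: mult.commute)
qed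

lemma dual_prox_descent:
  fixes k a r :: "'a::real_inner"
  assumes \<tau>: "\<tau> > 0"
    and mono: "\<tau> * \<mu> * (norm (a + r))\<^sup>2 \<le> inner (\<tau> *\<^sub>R k - r) (a + r)"
  shows "(1 / \<tau> + 2 * \<mu>) * (norm (a + r))\<^sup>2 \<le> ((norm a)\<^sup>2 - (norm r)\<^sup>2) / \<tau> + 2 * inner k (a + r)"
proof -
  define S I J where "S = (norm (a + r))\<^sup>2" and "I = inner r (a + r)" and "J = inner k (a + r)"
  have "S - 2 * I = (norm a)\<^sup>2 - (norm r)\<^sup>2"
    unfolding S_def I_def by (simp add: norm_sq_add_eq inner_add_right inner_commute power2_norm_eq_inner)
  moreover have "\<tau> * \<mu> * S \<le> \<tau> * J - I"
    using mono unfolding S_def I_def J_def by (simp add: inner_diff_left)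
  moreover have "\<tau> * ((1 / \<tau> + 2 * \<mu>) * S) = S + 2 * (\<tau> * \<mu> * S)"
    using \<tau> by (simp add: field_simps)
  moreover have "\<tau> * (((norm a)\<^sup>2 - (norm r)\<^sup>2) / \<tau> + 2 * J) = ((norm a)\<^sup>2 - (norm r)\<^sup>2) + 2 * (\<tau> * J)"
    using \<tau> by (simp add: field_simps)
  ultimately have "\<tau> * ((1 / \<tau> + 2 * \<mu>) * S) \<le> \<tau> * (((norm a)\<^sup>2 - (norm r)\<^sup>2) / \<tau> + 2 * J)"
    by argo
  then show ?thesis
    using \<tau> unfolding S_def J_def by simp
qed

lemma averaged_norm_sq_eq:
  fixes a r :: "'a::real_inner"
  assumes \<omega>: "\<omega> \<ge> 0"
  shows "(1 + \<omega>) * L * (norm (a + (1 / (1 + \<omega>)) *\<^sub>R r))\<^sup>2 + L / (1 + \<omega>) * (\<omega> * (norm r)\<^sup>2)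
           = \<omega> * L * (norm a)\<^sup>2 + L * (norm (a + r))\<^sup>2"
proof -
  define s where "s = 1 + \<omega>"
  have s: "s \<noteq> 0" and \<omega>_eq: "\<omega> = s - 1"
    using \<omega> by (auto simp: s_def)
  show ?thesis
    unfolding s_def[symmetric] \<omega>_eq norm_sq_add_eq
    using s by (simp add: power_mult_distrib field_simps power2_eq_square)
qed

lemma norm_adjoint_le:
  fixes f :: "'a::euclidean_space \<Rightarrow> 'b::euclidean_space"
  assumes f: "linear f"
  shows "norm (adjoint f y) \<le> onorm f * norm y"
proof -
  have bl: "bounded_linear f"
    using f linear_conv_bounded_linear by blast
  have "(norm (adjoint f y))\<^sup>2 = inner (f (adjoint f y)) y"
    using adjoint_works[OF f, of "adjoint f y" y] by (simp add: power2_norm_eq_inner)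
  also have "\<dots> \<le> norm (f (adjoint f y)) * norm y"
    by (rule norm_cauchy_schwarz)
  also have "\<dots> \<le> onorm f * norm (adjoint f y) * norm y"
    by (intro mult_right_mono onorm[OF bl]) auto
  finally have "norm (adjoint f y) * norm (adjoint f y) \<le> (onorm f * norm y) * norm (adjoint f y)"
    by (simp add: power2_eq_square algebra_simps)
  then show ?thesis
    using onorm_pos_le[OF bl] by (cases "adjoint f y = 0") auto
qed

locale randprox_cp =
  fixes M :: "'w measure"
    and K :: "'x::euclidean_space \<Rightarrow> 'u::euclidean_space"
    and g :: "'x \<Rightarrow> ereal" and h :: "'u \<Rightarrow> ereal"
    and \<mu>g \<mu>h \<gamma> \<tau> \<omega> \<omega>ran \<zeta> :: real
    and x0 :: 'x and u0 :: 'u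
    and x xhat :: "nat \<Rightarrow> 'w \<Rightarrow> 'x" and u d :: "nat \<Rightarrow> 'w \<Rightarrow> 'u"
    and xs :: 'x and us :: 'u
  assumes prob: "prob_space M"
    and K: "linear K"
    and g_closed: "closed_fun g"
    and g_sc: "strongly_convex \<mu>g g" and h_sc: "strongly_convex \<mu>h (conj_fun h)"
    and saddle_x: "- adjoint K us \<in> subdiff g xs" and saddle_u: "K xs \<in> subdiff (conj_fun h) us"
    and \<mu>g: "\<mu>g > 0" and \<mu>h: "\<mu>h > 0" and \<gamma>: "\<gamma> > 0" and \<tau>: "\<tau> > 0" and \<omega>: "\<omega> \<ge> 0"
    and \<zeta>: "\<zeta> \<le> 1"
    and step: "\<gamma> * \<tau> * ((1 - \<zeta>) * (onorm K)\<^sup>2 + \<omega>ran) \<le> 1"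
    and init: "\<And>w. x 0 w = x0" "\<And>w. u 0 w = u0"
    and xhat_eq: "\<And>t w. xhat t w = prox \<gamma> g (x t w - \<gamma> *\<^sub>R adjoint K (u t w))"
    and u_Suc: "\<And>t w. u (Suc t) w = u t w + (1 / (1 + \<omega>)) *\<^sub>R d t w"
    and x_Suc: "\<And>t w. x (Suc t) w = xhat t w - \<gamma> *\<^sub>R adjoint K (d t w)"
    and d_measurable: "\<And>t. d t \<in> borel_measurable M"
    and d_unbiased: "\<And>t v. AE w in M.
          real_cond_exp M (gen_filtration M x u t) (\<lambda>w. inner v (d t w)) w
          = inner v (prox \<tau> (conj_fun h) (u t w + \<tau> *\<^sub>R K (xhat t w)) - u t w)"
    and d_var: "\<And>t. AE w in M.
          nn_cond_exp M (gen_filtration M x u t)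
            (\<lambda>w. ennreal ((norm (d t w - (prox \<tau> (conj_fun h) (u t w + \<tau> *\<^sub>R K (xhat t w)) - u t w)))\<^sup>2)) w
          \<le> ennreal (\<omega> * (norm (prox \<tau> (conj_fun h) (u t w + \<tau> *\<^sub>R K (xhat t w)) - u t w))\<^sup>2)"
    and d_var_K: "\<And>t. AE w in M.
          (let r = prox \<tau> (conj_fun h) (u t w + \<tau> *\<^sub>R K (xhat t w)) - u t w in
           0 \<le> \<omega>ran * (norm r)\<^sup>2 - \<zeta> * (norm (adjoint K r))\<^sup>2 \<and>
           nn_cond_exp M (gen_filtration M x u t)
             (\<lambda>w'. ennreal ((norm (adjoint K (d t w' -
                (prox \<tau> (conj_fun h) (u t w' + \<tau> *\<^sub>R K (xhat t w')) - u t w'))))\<^sup>2)) w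
           \<le> ennreal (\<omega>ran * (norm r)\<^sup>2 - \<zeta> * (norm (adjoint K r))\<^sup>2))"
begin

definition lyapunov :: "'x \<Rightarrow> 'u \<Rightarrow> real" where
  "lyapunov p q = 1 / \<gamma> * (norm (p - xs))\<^sup>2 + (1 + \<omega>) * (1 / \<tau> + 2 * \<mu>h) * (norm (q - us))\<^sup>2"

definition \<Psi> :: "nat \<Rightarrow> 'w \<Rightarrow> real" where
  "\<Psi> t w = lyapunov (x t w) (u t w)"

definition dual_step :: "nat \<Rightarrow> 'w \<Rightarrow> 'u" where
  "dual_step t w = prox \<tau> (conj_fun h) (u t w + \<tau> *\<^sub>R K (xhat t w)) - u t w"

(* x_mean t and u_mean t are the conditional expectations of x (Suc t) and u (Suc t) given
   gen_filtration M x u t. *)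
definition x_mean :: "nat \<Rightarrow> 'w \<Rightarrow> 'x" where
  "x_mean t w = xhat t w - \<gamma> *\<^sub>R adjoint K (dual_step t w)"

definition u_mean :: "nat \<Rightarrow> 'w \<Rightarrow> 'u" where
  "u_mean t w = u t w + (1 / (1 + \<omega>)) *\<^sub>R dual_step t w"

definition noise_coupling :: "nat \<Rightarrow> 'w \<Rightarrow> 'u" where
  "noise_coupling t w = 2 *\<^sub>R ((1 / \<tau> + 2 * \<mu>h) *\<^sub>R (u_mean t w - us) - K (x_mean t w - xs))"

definition rate :: real where
  "rate = max (1 / (1 + \<gamma> * \<mu>g)) (1 - 2 * \<tau> * \<mu>h / ((1 + \<omega>) * (1 + 2 * \<tau> * \<mu>h)))"

lemma dual_weight_pos: "(1 + \<omega>) * (1 / \<tau> + 2 * \<mu>h) > 0"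
  using \<omega> \<tau> \<mu>h by (simp add: add_pos_pos)

lemma rate_eq: "rate = 1 - min (\<gamma> * \<mu>g / (1 + \<gamma> * \<mu>g)) (2 * \<tau> * \<mu>h / ((1 + \<omega>) * (1 + 2 * \<tau> * \<mu>h)))"
proof -
  have "0 < 1 + \<gamma> * \<mu>g"
    using \<gamma> \<mu>g by (simp add: add_pos_pos)
  then have "1 / (1 + \<gamma> * \<mu>g) = 1 - \<gamma> * \<mu>g / (1 + \<gamma> * \<mu>g)"
    by (simp add: field_simps)
  then show ?thesis
    unfolding rate_def by (simp add: max_def min_def)
qed

lemma rate_pos: "rate > 0"
  using \<gamma> \<mu>g unfolding rate_def by (simp add: less_max_iff_disj add_pos_pos)

lemma rate_less_1: "rate < 1"
proof -
  have "0 < 2 * \<tau> * \<mu>h / ((1 + \<omega>) * (1 + 2 * \<tau> * \<mu>h))"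
    using \<tau> \<mu>h \<omega> by (simp add: add_pos_pos)
  moreover have "0 < \<gamma> * \<mu>g / (1 + \<gamma> * \<mu>g)"
    using \<gamma> \<mu>g by (simp add: add_pos_pos)
  ultimately show ?thesis
    unfolding rate_eq by simp
qed

lemma g_convex: "convex_fun g"
  using strongly_convex_imp_convex_fun[OF g_sc] \<mu>g by simp

lemma h_conj_convex: "convex_fun (conj_fun h)"
  using strongly_convex_imp_convex_fun[OF h_sc] \<mu>h by simp

lemma prox_g_fixed_point: "prox \<gamma> g (xs - \<gamma> *\<^sub>R adjoint K us) = xs"
  by (rule prox_eqI_subdiff[OF g_convex g_closed saddle_x \<gamma>]) (use saddle_x \<gamma> in simp)

lemma prox_h_fixed_point: "prox \<tau> (conj_fun h) (us + \<tau> *\<^sub>R K xs) = us"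
  by (rule prox_eqI_subdiff[OF h_conj_convex closed_fun_conj_fun saddle_u \<tau>]) (use saddle_u \<tau> in simp)

lemma inner_adjoint: "inner p (adjoint K q) = inner (K p) q"
  by (rule adjoint_works[OF K])

lemma norm_K_le: "norm (K p) \<le> onorm K * norm p"
  using onorm K linear_conv_bounded_linear by blast

lemma xhat_err_le: "norm (xhat t w - xs) \<le> norm (x t w - xs) + \<gamma> * onorm K * norm (u t w - us)"
proof -
  have "norm (xhat t w - xs) \<le> norm ((x t w - \<gamma> *\<^sub>R adjoint K (u t w)) - (xs - \<gamma> *\<^sub>R adjoint K us))"
    using prox_nonexpansive[OF g_convex g_closed saddle_x \<gamma>,
        of "x t w - \<gamma> *\<^sub>R adjoint K (u t w)" "xs - \<gamma> *\<^sub>R adjoint K us"]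
    by (simp only: xhat_eq[symmetric] prox_g_fixed_point)
  also have "(x t w - \<gamma> *\<^sub>R adjoint K (u t w)) - (xs - \<gamma> *\<^sub>R adjoint K us)
      = (x t w - xs) - \<gamma> *\<^sub>R adjoint K (u t w - us)"
    by (simp add: linear_diff[OF adjoint_linear[OF K]] algebra_simps)
  also have "norm \<dots> \<le> norm (x t w - xs) + \<gamma> * norm (adjoint K (u t w - us))"
    using norm_triangle_ineq4 \<gamma> by (metis abs_of_pos norm_scaleR)
  also have "\<dots> \<le> norm (x t w - xs) + \<gamma> * (onorm K * norm (u t w - us))"
    using norm_adjoint_le[OF K] \<gamma> by (intro add_left_mono mult_left_mono) auto
  finally show ?thesis
    by (simp add: mult.assoc)
qed

lemma dual_step_le: "norm (dual_step t w) \<le> 2 * norm (u t w - us) + \<tau> * onorm K * norm (xhat t w - xs)"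
proof -
  have "norm (prox \<tau> (conj_fun h) (u t w + \<tau> *\<^sub>R K (xhat t w)) - us)
      \<le> norm ((u t w + \<tau> *\<^sub>R K (xhat t w)) - (us + \<tau> *\<^sub>R K xs))"
    using prox_nonexpansive[OF h_conj_convex closed_fun_conj_fun saddle_u \<tau>,
        of "u t w + \<tau> *\<^sub>R K (xhat t w)" "us + \<tau> *\<^sub>R K xs"]
    by (simp only: prox_h_fixed_point)
  also have "(u t w + \<tau> *\<^sub>R K (xhat t w)) - (us + \<tau> *\<^sub>R K xs) = (u t w - us) + \<tau> *\<^sub>R K (xhat t w - xs)"
    by (simp add: linear_diff[OF K] algebra_simps)
  also have "norm \<dots> \<le> norm (u t w - us) + \<tau> * (onorm K * norm (xhat t w - xs))"
    using norm_triangle_ineq[of "u t w - us" "\<tau> *\<^sub>R K (xhat t w - xs)"] norm_K_le[of "xhat t w - xs"] \<tau>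
    by (simp add: mult_left_mono order_trans)
  finally have "norm (prox \<tau> (conj_fun h) (u t w + \<tau> *\<^sub>R K (xhat t w)) - us)
      \<le> norm (u t w - us) + \<tau> * (onorm K * norm (xhat t w - xs))" .
  moreover have "dual_step t w = (prox \<tau> (conj_fun h) (u t w + \<tau> *\<^sub>R K (xhat t w)) - us) - (u t w - us)"
    by (simp add: dual_step_def)
  then have "norm (dual_step t w)
      \<le> norm (prox \<tau> (conj_fun h) (u t w + \<tau> *\<^sub>R K (xhat t w)) - us) + norm (u t w - us)"
    by (simp only: norm_triangle_ineq4)
  ultimately show ?thesis
    unfolding mult.assoc by linarith
qed

lemma norm_sq_le_lyapunov:
  shows "(norm (p - xs))\<^sup>2 \<le> \<gamma> * lyapunov p q"
    and "(norm (q - us))\<^sup>2 \<le> lyapunov p q / ((1 + \<omega>) * (1 / \<tau> + 2 * \<mu>h))"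
proof -
  define C where "C = (1 + \<omega>) * (1 / \<tau> + 2 * \<mu>h)"
  have C: "C > 0"
    unfolding C_def by (rule dual_weight_pos)
  have eq: "lyapunov p q = (norm (p - xs))\<^sup>2 / \<gamma> + C * (norm (q - us))\<^sup>2"
    by (simp add: lyapunov_def C_def)
  then show "(norm (p - xs))\<^sup>2 \<le> \<gamma> * lyapunov p q"
    using \<gamma> C by (simp add: field_simps)
  have "C * (norm (q - us))\<^sup>2 \<le> lyapunov p q"
    unfolding eq using \<gamma> by simp
  then show "(norm (q - us))\<^sup>2 \<le> lyapunov p q / C"
    using C by (simp add: field_simps)
qed

lemma contraction_le_rate:
  assumes E: "E \<ge> 0" and A: "A \<ge> 0"
  shows "E / (\<gamma> * (1 + 2 * \<gamma> * \<mu>g)) + \<omega> * (1 / \<tau> + 2 * \<mu>h) * A + A / \<tau>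
           \<le> rate * (1 / \<gamma> * E + (1 + \<omega>) * (1 / \<tau> + 2 * \<mu>h) * A)"
proof -
  define cg ch where "cg = 1 / (1 + \<gamma> * \<mu>g)"
    and "ch = 1 - 2 * \<tau> * \<mu>h / ((1 + \<omega>) * (1 + 2 * \<tau> * \<mu>h))"
  have "E / (\<gamma> * (1 + 2 * \<gamma> * \<mu>g)) = 1 / (1 + 2 * \<gamma> * \<mu>g) * (1 / \<gamma> * E)"
    by simp
  also have "\<dots> \<le> cg * (1 / \<gamma> * E)"
    unfolding cg_def using \<gamma> \<mu>g E
    by (intro mult_right_mono divide_left_mono) (auto simp: add_pos_pos)
  finally have primal: "E / (\<gamma> * (1 + 2 * \<gamma> * \<mu>g)) \<le> cg * (1 / \<gamma> * E)" .
  have "ch * ((1 + \<omega>) * (1 / \<tau> + 2 * \<mu>h)) = \<omega> * (1 / \<tau> + 2 * \<mu>h) + 1 / \<tau>"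
  proof -
    define D where "D = (1 + \<omega>) * (1 + 2 * \<tau> * \<mu>h)"
    have "D > 0"
      using \<omega> \<tau> \<mu>h by (simp add: D_def add_pos_pos)
    have weight: "(1 + \<omega>) * (1 / \<tau> + 2 * \<mu>h) = D / \<tau>"
      using \<tau> by (simp add: D_def field_simps)
    have "ch * (D / \<tau>) = D / \<tau> - 2 * \<mu>h"
      unfolding ch_def D_def[symmetric] using \<open>D > 0\<close> \<tau> by (simp add: field_simps)
    then show ?thesis
      unfolding weight[symmetric] by (simp add: algebra_simps add_divide_distrib)
  qed
  then have dual: "\<omega> * (1 / \<tau> + 2 * \<mu>h) * A + A / \<tau> = ch * ((1 + \<omega>) * (1 / \<tau> + 2 * \<mu>h) * A)"
    by (metis (no_types, opaque_lifting) distrib_right mult.assoc times_divide_eq_left mult_1)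
  have "cg \<le> rate" "ch \<le> rate"
    unfolding rate_def cg_def ch_def by auto
  moreover have "0 \<le> 1 / \<gamma> * E" "0 \<le> (1 + \<omega>) * (1 / \<tau> + 2 * \<mu>h) * A"
    using \<gamma> E A dual_weight_pos by simp_all
  ultimately have "cg * (1 / \<gamma> * E) + ch * ((1 + \<omega>) * (1 / \<tau> + 2 * \<mu>h) * A)
      \<le> rate * (1 / \<gamma> * E) + rate * ((1 + \<omega>) * (1 / \<tau> + 2 * \<mu>h) * A)"
    by (intro add_mono mult_right_mono)
  then show ?thesis
    using primal dual by (simp add: distrib_left)
qed

lemma primal_monotonicity:
  "\<gamma> * \<mu>g * (norm (xhat t w - xs))\<^sup>2
     \<le> inner ((x t w - xs - \<gamma> *\<^sub>R adjoint K (u t w - us)) - (xhat t w - xs)) (xhat t w - xs)"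
proof -
  have mono: "\<gamma> * \<mu>g * (norm (xhat t w - xs))\<^sup>2
      \<le> inner ((x t w - \<gamma> *\<^sub>R adjoint K (u t w) - xhat t w) - (xs - \<gamma> *\<^sub>R adjoint K us - xs))
          (xhat t w - xs)"
    using prox_strongly_monotone[OF g_sc less_imp_le[OF \<mu>g] g_closed saddle_x \<gamma>,
        of "x t w - \<gamma> *\<^sub>R adjoint K (u t w)" "xs - \<gamma> *\<^sub>R adjoint K us"]
    by (simp only: xhat_eq[symmetric] prox_g_fixed_point)
  moreover have "(x t w - \<gamma> *\<^sub>R adjoint K (u t w) - xhat t w) - (xs - \<gamma> *\<^sub>R adjoint K us - xs)
      = (x t w - xs - \<gamma> *\<^sub>R adjoint K (u t w - us)) - (xhat t w - xs)"
    by (simp add: linear_diff[OF adjoint_linear[OF K]] algebra_simps)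
  ultimately show ?thesis
    by metis
qed

lemma dual_monotonicity:
  "\<tau> * \<mu>h * (norm (u t w - us + dual_step t w))\<^sup>2
     \<le> inner (\<tau> *\<^sub>R K (xhat t w - xs) - dual_step t w) (u t w - us + dual_step t w)"
proof -
  have prox_eq: "prox \<tau> (conj_fun h) (u t w + \<tau> *\<^sub>R K (xhat t w)) = u t w + dual_step t w"
    by (simp add: dual_step_def)
  have "\<tau> * \<mu>h * (norm (u t w + dual_step t w - us))\<^sup>2
      \<le> inner ((u t w + \<tau> *\<^sub>R K (xhat t w) - (u t w + dual_step t w)) - (us + \<tau> *\<^sub>R K xs - us))
          (u t w + dual_step t w - us)"
    using prox_strongly_monotone[OF h_sc less_imp_le[OF \<mu>h] closed_fun_conj_fun saddle_u \<tau>,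
        of "u t w + \<tau> *\<^sub>R K (xhat t w)" "us + \<tau> *\<^sub>R K xs"]
    unfolding prox_eq prox_h_fixed_point .
  moreover have "(u t w + \<tau> *\<^sub>R K (xhat t w) - (u t w + dual_step t w)) - (us + \<tau> *\<^sub>R K xs - us)
      = \<tau> *\<^sub>R K (xhat t w - xs) - dual_step t w"
    by (simp add: linear_diff[OF K] algebra_simps)
  moreover have "u t w + dual_step t w - us = u t w - us + dual_step t w"
    by simp
  ultimately show ?thesis
    by metis
qed

lemma step_size_bound:
  "\<gamma> * ((1 - \<zeta>) * (norm (adjoint K r))\<^sup>2 + \<omega>ran * (norm r)\<^sup>2) \<le> (norm r)\<^sup>2 / \<tau>"
proof -
  have "(norm (adjoint K r))\<^sup>2 \<le> (onorm K)\<^sup>2 * (norm r)\<^sup>2"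
    using norm_adjoint_le[OF K, of r] by (metis norm_ge_zero power_mono power_mult_distrib)
  then have "(1 - \<zeta>) * (norm (adjoint K r))\<^sup>2 \<le> (1 - \<zeta>) * ((onorm K)\<^sup>2 * (norm r)\<^sup>2)"
    using \<zeta> by (intro mult_left_mono) auto
  then have "(1 - \<zeta>) * (norm (adjoint K r))\<^sup>2 + \<omega>ran * (norm r)\<^sup>2
      \<le> ((1 - \<zeta>) * (onorm K)\<^sup>2 + \<omega>ran) * (norm r)\<^sup>2"
    by (simp add: distrib_right mult.assoc)
  then have "\<gamma> * \<tau> * ((1 - \<zeta>) * (norm (adjoint K r))\<^sup>2 + \<omega>ran * (norm r)\<^sup>2)
      \<le> (\<gamma> * \<tau> * ((1 - \<zeta>) * (onorm K)\<^sup>2 + \<omega>ran)) * (norm r)\<^sup>2"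
    using \<gamma> \<tau> by (simp add: mult_left_mono mult.assoc)
  also have "\<dots> \<le> (norm r)\<^sup>2"
    using mult_right_mono[OF step, of "(norm r)\<^sup>2"] by simp
  finally show ?thesis
    using \<tau> by (simp add: field_simps)
qed

lemma lyapunov_mean_eq:
  "lyapunov (x_mean t w) (u_mean t w) + (1 / \<tau> + 2 * \<mu>h) / (1 + \<omega>) * (\<omega> * (norm (dual_step t w))\<^sup>2)
     = (norm (xhat t w - xs))\<^sup>2 / \<gamma> - 2 * inner (K (xhat t w - xs)) (dual_step t w)
       + \<gamma> * (norm (adjoint K (dual_step t w)))\<^sup>2
       + \<omega> * (1 / \<tau> + 2 * \<mu>h) * (norm (u t w - us))\<^sup>2
       + (1 / \<tau> + 2 * \<mu>h) * (norm (u t w - us + dual_step t w))\<^sup>2"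
proof -
  define a q r where "a = u t w - us" and "q = xhat t w - xs" and "r = dual_step t w"
  define L where "L = 1 / \<tau> + 2 * \<mu>h"
  have x_err: "x_mean t w - xs = q - \<gamma> *\<^sub>R adjoint K r"
    by (simp add: x_mean_def q_def r_def algebra_simps)
  have u_err: "u_mean t w - us = a + (1 / (1 + \<omega>)) *\<^sub>R r"
    by (simp add: u_mean_def a_def r_def algebra_simps)
  have "(norm (q - \<gamma> *\<^sub>R adjoint K r))\<^sup>2 / \<gamma>
      = (norm q)\<^sup>2 / \<gamma> - 2 * inner (K q) r + \<gamma> * (norm (adjoint K r))\<^sup>2"
    unfolding norm_sq_diff_eq using \<gamma>
    by (simp add: inner_adjoint power_mult_distrib field_simps power2_eq_square)
  moreover have "(1 + \<omega>) * L * (norm (a + (1 / (1 + \<omega>)) *\<^sub>R r))\<^sup>2 + L / (1 + \<omega>) * (\<omega> * (norm r)\<^sup>2)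
      = \<omega> * L * (norm a)\<^sup>2 + L * (norm (a + r))\<^sup>2"
    by (rule averaged_norm_sq_eq[OF \<omega>])
  ultimately show ?thesis
    unfolding lyapunov_def x_err u_err L_def[symmetric] a_def[symmetric] q_def[symmetric] r_def[symmetric]
    by (simp add: algebra_simps)
qed

lemma lyapunov_mean_le:
  "lyapunov (x_mean t w) (u_mean t w)
     + \<gamma> * (\<omega>ran * (norm (dual_step t w))\<^sup>2 - \<zeta> * (norm (adjoint K (dual_step t w)))\<^sup>2)
     + (1 / \<tau> + 2 * \<mu>h) / (1 + \<omega>) * (\<omega> * (norm (dual_step t w))\<^sup>2)
   \<le> rate * \<Psi> t w"
proof -
  define e a q r where "e = x t w - xs" and "a = u t w - us" and "q = xhat t w - xs"
    and "r = dual_step t w"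
  define L KR where "L = 1 / \<tau> + 2 * \<mu>h" and "KR = (norm (adjoint K r))\<^sup>2"
  have dual: "L * (norm (a + r))\<^sup>2 \<le> ((norm a)\<^sup>2 - (norm r)\<^sup>2) / \<tau> + 2 * inner (K q) (a + r)"
    unfolding L_def using dual_prox_descent[OF \<tau> dual_monotonicity[of t w]] by (simp add: a_def q_def r_def)
  have step: "\<gamma> * KR - \<gamma> * (\<zeta> * KR) + \<gamma> * (\<omega>ran * (norm r)\<^sup>2) \<le> (norm r)\<^sup>2 / \<tau>"
    using step_size_bound[of r] by (simp add: KR_def algebra_simps)
  have primal: "(norm q)\<^sup>2 / \<gamma> + 2 * inner q (adjoint K a) \<le> (norm e)\<^sup>2 / (\<gamma> * (1 + 2 * \<gamma> * \<mu>g))"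
    using primal_prox_descent[OF \<gamma> less_imp_le[OF \<mu>g] primal_monotonicity[of t w]]
    by (simp add: e_def a_def q_def)
  have "lyapunov (x_mean t w) (u_mean t w)
       + \<gamma> * (\<omega>ran * (norm r)\<^sup>2 - \<zeta> * KR) + L / (1 + \<omega>) * (\<omega> * (norm r)\<^sup>2)
      = (norm q)\<^sup>2 / \<gamma> - 2 * inner (K q) r + \<gamma> * KR + \<omega> * L * (norm a)\<^sup>2 + L * (norm (a + r))\<^sup>2
       + (\<gamma> * (\<omega>ran * (norm r)\<^sup>2) - \<gamma> * (\<zeta> * KR))"
    using lyapunov_mean_eq[of t w] unfolding L_def KR_def a_def q_def r_def by (simp add: algebra_simps)
  also have "\<dots> \<le> (norm q)\<^sup>2 / \<gamma> + 2 * inner q (adjoint K a) + \<omega> * L * (norm a)\<^sup>2 + (norm a)\<^sup>2 / \<tau>"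
  proof -
    \<comment> \<open>the dual monotonicity cancels the coupling term, the step-size bound the adjoint terms\<close>
    have "inner (K q) (a + r) = inner q (adjoint K a) + inner (K q) r"
      by (simp add: inner_add_right inner_adjoint)
    moreover have "((norm a)\<^sup>2 - (norm r)\<^sup>2) / \<tau> = (norm a)\<^sup>2 / \<tau> - (norm r)\<^sup>2 / \<tau>"
      by (simp add: diff_divide_distrib)
    ultimately show ?thesis
      using dual step by argo
  qed
  also have "\<dots> \<le> (norm e)\<^sup>2 / (\<gamma> * (1 + 2 * \<gamma> * \<mu>g)) + \<omega> * L * (norm a)\<^sup>2 + (norm a)\<^sup>2 / \<tau>"
    using primal by simp
  also have "\<dots> \<le> rate * \<Psi> t w"
    using contraction_le_rate[of "(norm e)\<^sup>2" "(norm a)\<^sup>2"]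
    by (simp add: \<Psi>_def lyapunov_def e_def a_def L_def)
  finally show ?thesis
    by (simp add: r_def KR_def L_def)
qed

lemma \<Psi>_Suc_eq:
  "\<Psi> (Suc t) w = lyapunov (x_mean t w) (u_mean t w)
     + inner (noise_coupling t w) (d t w - dual_step t w)
     + \<gamma> * (norm (adjoint K (d t w - dual_step t w)))\<^sup>2
     + (1 / \<tau> + 2 * \<mu>h) / (1 + \<omega>) * (norm (d t w - dual_step t w))\<^sup>2"
proof -
  define X B \<delta> where "X = x_mean t w - xs" and "B = u_mean t w - us" and "\<delta> = d t w - dual_step t w"
  define L where "L = 1 / \<tau> + 2 * \<mu>h"
  define s where "s = 1 + \<omega>"
  have "s \<noteq> 0"
    using \<omega> by (simp add: s_def)
  have x_err: "x (Suc t) w - xs = X - \<gamma> *\<^sub>R adjoint K \<delta>"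
    unfolding x_Suc X_def \<delta>_def x_mean_def
    by (simp add: linear_diff[OF adjoint_linear[OF K]] algebra_simps)
  have u_err: "u (Suc t) w - us = B + (1 / (1 + \<omega>)) *\<^sub>R \<delta>"
    unfolding u_Suc B_def \<delta>_def u_mean_def by (simp add: algebra_simps)
  have "1 / \<gamma> * (norm (X - \<gamma> *\<^sub>R adjoint K \<delta>))\<^sup>2
      = 1 / \<gamma> * (norm X)\<^sup>2 - 2 * inner (K X) \<delta> + \<gamma> * (norm (adjoint K \<delta>))\<^sup>2"
    unfolding norm_sq_diff_eq using \<gamma>
    by (simp add: inner_adjoint power_mult_distrib field_simps power2_eq_square)
  moreover have "(1 + \<omega>) * L * (norm (B + (1 / (1 + \<omega>)) *\<^sub>R \<delta>))\<^sup>2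
      = (1 + \<omega>) * L * (norm B)\<^sup>2 + 2 * L * inner B \<delta> + L / (1 + \<omega>) * (norm \<delta>)\<^sup>2"
    unfolding norm_sq_add_eq s_def[symmetric] using \<open>s \<noteq> 0\<close>
    by (simp add: power_mult_distrib field_simps power2_eq_square)
  moreover have "inner (noise_coupling t w) \<delta> = 2 * L * inner B \<delta> - 2 * inner (K X) \<delta>"
    by (simp add: noise_coupling_def X_def B_def L_def inner_diff_left)
  ultimately show ?thesis
    unfolding \<Psi>_def lyapunov_def x_err u_err
    by (simp add: X_def B_def \<delta>_def L_def algebra_simps)
qed

abbreviation F :: "nat \<Rightarrow> 'w measure" where
  "F t \<equiv> gen_filtration M x u t"

section \<open>Expected contraction and almost sure convergence\<close>

lemma prox_g_measurable [measurable]: "prox \<gamma> g \<in> borel_measurable borel"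
  by (rule borel_measurable_continuous_onI[OF continuous_on_prox[OF g_convex g_closed saddle_x \<gamma>]])

lemma prox_h_measurable [measurable]: "prox \<tau> (conj_fun h) \<in> borel_measurable borel"
  by (rule borel_measurable_continuous_onI
      [OF continuous_on_prox[OF h_conj_convex closed_fun_conj_fun saddle_u \<tau>]])

lemma K_measurable [measurable]: "K \<in> borel_measurable borel"
  using K by (intro borel_measurable_continuous_onI linear_continuous_on) (simp add: linear_conv_bounded_linear)

lemma adjoint_measurable [measurable]: "adjoint K \<in> borel_measurable borel"
  using adjoint_linear[OF K]
  by (intro borel_measurable_continuous_onI linear_continuous_on) (simp add: linear_conv_bounded_linear)

lemma x_u_measurable: "x t \<in> borel_measurable M \<and> u t \<in> borel_measurable M"
proof (induction t)
  case 0
  then show ?case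
    by (simp add: init)
next
  case (Suc t)
  then have [measurable]: "x t \<in> borel_measurable M" "u t \<in> borel_measurable M"
    by auto
  have [measurable]: "d t \<in> borel_measurable M"
    by (rule d_measurable)
  have "x (Suc t) = (\<lambda>w. prox \<gamma> g (x t w - \<gamma> *\<^sub>R adjoint K (u t w)) - \<gamma> *\<^sub>R adjoint K (d t w))"
    by (simp add: x_Suc xhat_eq fun_eq_iff)
  moreover have "u (Suc t) = (\<lambda>w. u t w + (1 / (1 + \<omega>)) *\<^sub>R d t w)"
    by (simp add: u_Suc fun_eq_iff)
  ultimately show ?case
    by simp
qed

lemma x_measurable [measurable]: "x t \<in> borel_measurable M"
  using x_u_measurable by blast

lemma u_measurable [measurable]: "u t \<in> borel_measurable M"
  using x_u_measurable by blast

lemma sigma_finite_F: "sigma_finite_subalgebra M (F t)"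
  using prob_space.sigma_finite_subalgebra_gen_filtration[where x = x and u = u, OF prob x_measurable u_measurable] .

lemma measurable_from_F: "f \<in> borel_measurable (F t) \<Longrightarrow> f \<in> borel_measurable M"
  using measurable_from_subalg[OF subalgebra_gen_filtration[where x = x and u = u, OF x_measurable u_measurable]] .

lemma x_F_measurable [measurable]: "s \<le> t \<Longrightarrow> x s \<in> borel_measurable (F t)"
  by (rule measurable_gen_filtration_fst)

lemma u_F_measurable [measurable]: "s \<le> t \<Longrightarrow> u s \<in> borel_measurable (F t)"
  by (rule measurable_gen_filtration_snd)

lemma xhat_F_measurable [measurable]: "xhat t \<in> borel_measurable (F t)"
  unfolding xhat_eq[abs_def] by measurable

lemma dual_step_F_measurable [measurable]: "dual_step t \<in> borel_measurable (F t)"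
  unfolding dual_step_def[abs_def] by measurable

lemma noise_coupling_F_measurable [measurable]: "noise_coupling t \<in> borel_measurable (F t)"
  unfolding noise_coupling_def[abs_def] x_mean_def u_mean_def by measurable

lemma dual_step_measurable [measurable]: "dual_step t \<in> borel_measurable M"
  by (rule measurable_from_F) measurable

lemma noise_coupling_measurable [measurable]: "noise_coupling t \<in> borel_measurable M"
  by (rule measurable_from_F) measurable

lemma \<Psi>_measurable [measurable]: "\<Psi> t \<in> borel_measurable M"
  unfolding \<Psi>_def[abs_def] lyapunov_def by measurable

lemma lyapunov_mean_measurable [measurable]:
  "(\<lambda>w. lyapunov (x_mean t w) (u_mean t w)) \<in> borel_measurable M"
  unfolding lyapunov_def x_mean_def u_mean_def by (rule measurable_from_F) measurable

lemma lyapunov_nonneg: "0 \<le> lyapunov p q"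
  unfolding lyapunov_def using \<gamma> \<omega> \<tau> \<mu>h by (intro add_nonneg_nonneg mult_nonneg_nonneg) auto

lemma onorm_K_nonneg: "0 \<le> onorm K"
  using K onorm_pos_le linear_conv_bounded_linear by blast

lemma dual_step_sq_le:
  "(norm (dual_step t w))\<^sup>2
     \<le> 2 * (\<tau> * onorm K)\<^sup>2 * (norm (x t w - xs))\<^sup>2 + 2 * (2 + \<tau> * \<gamma> * (onorm K)\<^sup>2)\<^sup>2 * (norm (u t w - us))\<^sup>2"
proof -
  have k: "0 \<le> \<tau> * onorm K"
    using \<tau> onorm_K_nonneg by simp
  have "norm (dual_step t w) \<le> 2 * norm (u t w - us) + \<tau> * onorm K * (norm (x t w - xs) + \<gamma> * onorm K * norm (u t w - us))"
    using dual_step_le[of t w] mult_left_mono[OF xhat_err_le[of t w] k] by linarith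
  also have "\<dots> = \<tau> * onorm K * norm (x t w - xs) + (2 + \<tau> * \<gamma> * (onorm K)\<^sup>2) * norm (u t w - us)"
    by (simp add: algebra_simps power2_eq_square)
  finally have "(norm (dual_step t w))\<^sup>2 \<le> (\<tau> * onorm K * norm (x t w - xs) + (2 + \<tau> * \<gamma> * (onorm K)\<^sup>2) * norm (u t w - us))\<^sup>2"
    by (simp add: power_mono)
  also have "\<dots> \<le> 2 * (\<tau> * onorm K * norm (x t w - xs))\<^sup>2 + 2 * ((2 + \<tau> * \<gamma> * (onorm K)\<^sup>2) * norm (u t w - us))\<^sup>2"
    using norm_sq_add_le[of "\<tau> * onorm K * norm (x t w - xs)" "(2 + \<tau> * \<gamma> * (onorm K)\<^sup>2) * norm (u t w - us)"]
    by simp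
  finally show ?thesis
    by (simp add: power_mult_distrib mult.assoc)
qed

lemma noise_coupling_sq_le:
  "(norm (noise_coupling t w))\<^sup>2
     \<le> 8 * (1 / \<tau> + 2 * \<mu>h)\<^sup>2 * (norm (u_mean t w - us))\<^sup>2 + 8 * (onorm K)\<^sup>2 * (norm (x_mean t w - xs))\<^sup>2"
proof -
  define L B X where "L = 1 / \<tau> + 2 * \<mu>h" and "B = u_mean t w - us" and "X = x_mean t w - xs"
  have "(norm (noise_coupling t w))\<^sup>2 = 4 * (norm (L *\<^sub>R B - K X))\<^sup>2"
    by (simp add: noise_coupling_def L_def B_def X_def power_mult_distrib)
  moreover have "(norm (L *\<^sub>R B - K X))\<^sup>2 \<le> 2 * (L\<^sup>2 * (norm B)\<^sup>2) + 2 * (norm (K X))\<^sup>2"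
    using norm_sq_add_le[of "L *\<^sub>R B" "- K X"] by (simp add: power_mult_distrib)
  moreover have "(norm (K X))\<^sup>2 \<le> (onorm K)\<^sup>2 * (norm X)\<^sup>2"
    using power_mono[OF norm_K_le[of X] norm_ge_zero, of 2] by (simp add: power_mult_distrib)
  ultimately show ?thesis
    unfolding L_def B_def X_def by linarith
qed

lemma integrable_error_sq:
  assumes "integrable M (\<Psi> t)"
  shows "integrable M (\<lambda>w. (norm (x t w - xs))\<^sup>2)" and "integrable M (\<lambda>w. (norm (u t w - us))\<^sup>2)"
proof -
  have le: "(norm (x t w - xs))\<^sup>2 \<le> \<gamma> * \<Psi> t w"
    "(norm (u t w - us))\<^sup>2 \<le> \<Psi> t w / ((1 + \<omega>) * (1 / \<tau> + 2 * \<mu>h))" for w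
    using norm_sq_le_lyapunov[where p = "x t w" and q = "u t w"] by (simp_all add: \<Psi>_def)
  show "integrable M (\<lambda>w. (norm (x t w - xs))\<^sup>2)"
    by (rule integrable_real_bound[where f = "\<lambda>w. \<gamma> * \<Psi> t w"], measurable) (use assms le in auto)
  show "integrable M (\<lambda>w. (norm (u t w - us))\<^sup>2)"
    by (rule integrable_real_bound[where f = "\<lambda>w. \<Psi> t w / ((1 + \<omega>) * (1 / \<tau> + 2 * \<mu>h))"], measurable)
      (use assms le in auto)
qed

lemma integrable_dual_step_sq:
  assumes "integrable M (\<Psi> t)"
  shows "integrable M (\<lambda>w. (norm (dual_step t w))\<^sup>2)"
    and "integrable M (\<lambda>w. (norm (adjoint K (dual_step t w)))\<^sup>2)"
proof -
  show r: "integrable M (\<lambda>w. (norm (dual_step t w))\<^sup>2)"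
    by (rule integrable_real_bound[where f = "\<lambda>w. 2 * (\<tau> * onorm K)\<^sup>2 * (norm (x t w - xs))\<^sup>2
        + 2 * (2 + \<tau> * \<gamma> * (onorm K)\<^sup>2)\<^sup>2 * (norm (u t w - us))\<^sup>2"], measurable)
      (use integrable_error_sq[OF assms] dual_step_sq_le[of t] in auto)
  have K_le: "(norm (adjoint K (dual_step t w)))\<^sup>2 \<le> (onorm K)\<^sup>2 * (norm (dual_step t w))\<^sup>2" for w
    using power_mono[OF norm_adjoint_le[OF K] norm_ge_zero, where n = 2] by (simp add: power_mult_distrib)
  show "integrable M (\<lambda>w. (norm (adjoint K (dual_step t w)))\<^sup>2)"
    by (rule integrable_real_bound[where f = "\<lambda>w. (onorm K)\<^sup>2 * (norm (dual_step t w))\<^sup>2"], measurable)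
      (use r K_le in auto)
qed

lemma variance_term_nonneg:
  "AE w in M. 0 \<le> \<omega>ran * (norm (dual_step t w))\<^sup>2 - \<zeta> * (norm (adjoint K (dual_step t w)))\<^sup>2"
  using d_var_K[of t] by eventually_elim (simp add: Let_def dual_step_def)

lemma lyapunov_mean_le_AE: "AE w in M. lyapunov (x_mean t w) (u_mean t w) \<le> rate * \<Psi> t w"
  using variance_term_nonneg[of t]
proof eventually_elim
  case (elim w)
  have "0 \<le> \<gamma> * (\<omega>ran * (norm (dual_step t w))\<^sup>2 - \<zeta> * (norm (adjoint K (dual_step t w)))\<^sup>2)"
    using elim \<gamma> by simp
  moreover have "0 \<le> (1 / \<tau> + 2 * \<mu>h) / (1 + \<omega>) * (\<omega> * (norm (dual_step t w))\<^sup>2)"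
    using \<tau> \<mu>h \<omega> by simp
  ultimately show ?case
    using lyapunov_mean_le[of t w] by linarith
qed

lemma integrable_lyapunov_mean:
  assumes "integrable M (\<Psi> t)"
  shows "integrable M (\<lambda>w. lyapunov (x_mean t w) (u_mean t w))"
  by (rule integrable_real_bound[where f = "\<lambda>w. rate * \<Psi> t w"], measurable)
    (use assms lyapunov_mean_le_AE[of t] lyapunov_nonneg in auto)

lemma integrable_noise_coupling_sq:
  assumes "integrable M (\<Psi> t)"
  shows "integrable M (\<lambda>w. (norm (noise_coupling t w))\<^sup>2)"
proof -
  define L C \<Phi> where "L = 1 / \<tau> + 2 * \<mu>h" and "C = (1 + \<omega>) * (1 / \<tau> + 2 * \<mu>h)"
    and "\<Phi> w = lyapunov (x_mean t w) (u_mean t w)" for w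
  have le: "(norm (noise_coupling t w))\<^sup>2 \<le> 8 * L\<^sup>2 * (\<Phi> w / C) + 8 * (onorm K)\<^sup>2 * (\<gamma> * \<Phi> w)" for w
  proof -
    have "8 * L\<^sup>2 * (norm (u_mean t w - us))\<^sup>2 \<le> 8 * L\<^sup>2 * (\<Phi> w / C)"
      using norm_sq_le_lyapunov(2)[where p = "x_mean t w" and q = "u_mean t w"]
      by (intro mult_left_mono) (auto simp: \<Phi>_def C_def)
    moreover have "8 * (onorm K)\<^sup>2 * (norm (x_mean t w - xs))\<^sup>2 \<le> 8 * (onorm K)\<^sup>2 * (\<gamma> * \<Phi> w)"
      using norm_sq_le_lyapunov(1)[where p = "x_mean t w" and q = "u_mean t w"]
      by (intro mult_left_mono) (auto simp: \<Phi>_def)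
    ultimately show ?thesis
      using noise_coupling_sq_le[of t w] unfolding L_def by linarith
  qed
  show ?thesis
    by (rule integrable_real_bound[where f = "\<lambda>w. 8 * L\<^sup>2 * (\<Phi> w / C) + 8 * (onorm K)\<^sup>2 * (\<gamma> * \<Phi> w)"],
        measurable) (use integrable_lyapunov_mean[OF assms] le in \<open>auto simp: \<Phi>_def\<close>)
qed

lemma d_unbiased_dual_step:
  "AE w in M. real_cond_exp M (F t) (\<lambda>w. inner v (d t w)) w = inner v (dual_step t w)"
  using d_unbiased[of t v] unfolding dual_step_def .

lemma d_variance:
  "AE w in M. nn_cond_exp M (F t) (\<lambda>w. ennreal ((norm (d t w - dual_step t w))\<^sup>2)) w
     \<le> ennreal (\<omega> * (norm (dual_step t w))\<^sup>2)"
  using d_var[of t] unfolding dual_step_def .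

lemma d_variance_adjoint:
  "AE w in M. nn_cond_exp M (F t) (\<lambda>w. ennreal ((norm (adjoint K (d t w - dual_step t w)))\<^sup>2)) w
     \<le> ennreal (\<omega>ran * (norm (dual_step t w))\<^sup>2 - \<zeta> * (norm (adjoint K (dual_step t w)))\<^sup>2)"
  using d_var_K[of t] by eventually_elim (simp add: Let_def dual_step_def)

lemma noise_second_moments:
  assumes int: "integrable M (\<Psi> t)"
  shows "integrable M (\<lambda>w. (norm (d t w - dual_step t w))\<^sup>2)"
    and "(\<integral>w. (norm (d t w - dual_step t w))\<^sup>2 \<partial>M) \<le> (\<integral>w. \<omega> * (norm (dual_step t w))\<^sup>2 \<partial>M)"
    and "integrable M (\<lambda>w. (norm (adjoint K (d t w - dual_step t w)))\<^sup>2)"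
    and "(\<integral>w. (norm (adjoint K (d t w - dual_step t w)))\<^sup>2 \<partial>M)
           \<le> (\<integral>w. \<omega>ran * (norm (dual_step t w))\<^sup>2 - \<zeta> * (norm (adjoint K (dual_step t w)))\<^sup>2 \<partial>M)"
proof -
  interpret S: sigma_finite_subalgebra M "F t"
    by (rule sigma_finite_F)
  note [measurable] = d_measurable[of t]
  have m1: "(\<lambda>w. (norm (d t w - dual_step t w))\<^sup>2) \<in> borel_measurable M"
    by measurable
  have m2: "(\<lambda>w. (norm (adjoint K (d t w - dual_step t w)))\<^sup>2) \<in> borel_measurable M"
    by measurable
  have nn: "0 \<le> (norm (d t w - dual_step t w))\<^sup>2" "0 \<le> (norm (adjoint K (d t w - dual_step t w)))\<^sup>2" for w
    by simp_all
  have i1: "integrable M (\<lambda>w. \<omega> * (norm (dual_step t w))\<^sup>2)"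
    and i2: "integrable M (\<lambda>w. \<omega>ran * (norm (dual_step t w))\<^sup>2 - \<zeta> * (norm (adjoint K (dual_step t w)))\<^sup>2)"
    using integrable_dual_step_sq[OF int] by simp_all
  have nn1: "AE w in M. 0 \<le> \<omega> * (norm (dual_step t w))\<^sup>2"
    using \<omega> by simp
  note bound1 = S.integral_le_of_nn_cond_exp_le[OF m1 nn(1) i1 nn1 d_variance]
  note bound2 = S.integral_le_of_nn_cond_exp_le[OF m2 nn(2) i2 variance_term_nonneg d_variance_adjoint]
  show "integrable M (\<lambda>w. (norm (d t w - dual_step t w))\<^sup>2)"
    by (rule bound1(1))
  show "(\<integral>w. (norm (d t w - dual_step t w))\<^sup>2 \<partial>M) \<le> (\<integral>w. \<omega> * (norm (dual_step t w))\<^sup>2 \<partial>M)"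
    by (rule bound1(2))
  show "integrable M (\<lambda>w. (norm (adjoint K (d t w - dual_step t w)))\<^sup>2)"
    by (rule bound2(1))
  show "(\<integral>w. (norm (adjoint K (d t w - dual_step t w)))\<^sup>2 \<partial>M)
      \<le> (\<integral>w. \<omega>ran * (norm (dual_step t w))\<^sup>2 - \<zeta> * (norm (adjoint K (dual_step t w)))\<^sup>2 \<partial>M)"
    by (rule bound2(2))
qed

lemma cross_term_centered:
  assumes int: "integrable M (\<Psi> t)"
  shows "integrable M (\<lambda>w. inner (noise_coupling t w) (d t w - dual_step t w))"
    and "(\<integral>w. inner (noise_coupling t w) (d t w - dual_step t w) \<partial>M) = 0"
proof -
  interpret S: sigma_finite_subalgebra M "F t"
    by (rule sigma_finite_F)
  note [measurable] = d_measurable[of t]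
  have "integrable M (\<lambda>w. (norm (d t w))\<^sup>2)"
  proof (rule integrable_real_bound[where f = "\<lambda>w. 2 * (norm (dual_step t w))\<^sup>2
      + 2 * (norm (d t w - dual_step t w))\<^sup>2"], measurable)
    show "integrable M (\<lambda>w. 2 * (norm (dual_step t w))\<^sup>2 + 2 * (norm (d t w - dual_step t w))\<^sup>2)"
      using integrable_dual_step_sq(1)[OF int] noise_second_moments(1)[OF int] by simp
    show "AE w in M. (norm (d t w))\<^sup>2 \<le> 2 * (norm (dual_step t w))\<^sup>2 + 2 * (norm (d t w - dual_step t w))\<^sup>2"
    proof (intro AE_I2)
      fix w
      show "(norm (d t w))\<^sup>2 \<le> 2 * (norm (dual_step t w))\<^sup>2 + 2 * (norm (d t w - dual_step t w))\<^sup>2"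
        using norm_sq_add_le[of "dual_step t w" "d t w - dual_step t w"] by simp
    qed
  qed simp
  then show "integrable M (\<lambda>w. inner (noise_coupling t w) (d t w - dual_step t w))"
    and "(\<integral>w. inner (noise_coupling t w) (d t w - dual_step t w) \<partial>M) = 0"
    using S.integral_inner_cond_centered_eq_0[OF noise_coupling_F_measurable d_measurable
        dual_step_measurable d_unbiased_dual_step integrable_noise_coupling_sq[OF int] _
        integrable_dual_step_sq(1)[OF int]]
    by simp_all
qed

lemma expectation_step:
  assumes int: "integrable M (\<Psi> t)"
  shows "integrable M (\<Psi> (Suc t))" and "(\<integral>w. \<Psi> (Suc t) w \<partial>M) \<le> rate * (\<integral>w. \<Psi> t w \<partial>M)"
proof -
  define r \<Phi> G where "r = dual_step t" and "\<Phi> w = lyapunov (x_mean t w) (u_mean t w)"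
    and "G w = \<omega>ran * (norm (r w))\<^sup>2 - \<zeta> * (norm (adjoint K (r w)))\<^sup>2" for w
  define c where "c = (1 / \<tau> + 2 * \<mu>h) / (1 + \<omega>)"
  have c: "0 \<le> c"
    using \<tau> \<mu>h \<omega> by (simp add: c_def)
  have i_G: "integrable M G" and i_\<omega>R: "integrable M (\<lambda>w. \<omega> * (norm (r w))\<^sup>2)"
    using integrable_dual_step_sq[OF int] by (simp_all add: r_def G_def[abs_def])
  have i_\<Phi>: "integrable M \<Phi>"
    using integrable_lyapunov_mean[OF int] by (simp add: \<Phi>_def[abs_def])
  note noise = noise_second_moments[OF int, folded r_def]
  note cross = cross_term_centered[OF int, folded r_def]
  have Suc_eq: "\<Psi> (Suc t) = (\<lambda>w. (\<Phi> w + inner (noise_coupling t w) (d t w - r w))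
      + (\<gamma> * (norm (adjoint K (d t w - r w)))\<^sup>2 + c * (norm (d t w - r w))\<^sup>2))"
    by (simp add: fun_eq_iff \<Psi>_Suc_eq \<Phi>_def r_def c_def add.assoc)
  show "integrable M (\<Psi> (Suc t))"
    unfolding Suc_eq using i_\<Phi> cross(1) noise(1,3) by simp
  have "(\<integral>w. \<Psi> (Suc t) w \<partial>M) = ((\<integral>w. \<Phi> w \<partial>M) + 0)
      + (\<gamma> * (\<integral>w. (norm (adjoint K (d t w - r w)))\<^sup>2 \<partial>M) + c * (\<integral>w. (norm (d t w - r w))\<^sup>2 \<partial>M))"
    unfolding Suc_eq using i_\<Phi> cross noise(1,3) by simp
  also have "\<dots> \<le> ((\<integral>w. \<Phi> w \<partial>M) + 0) + (\<gamma> * (\<integral>w. G w \<partial>M) + c * (\<integral>w. \<omega> * (norm (r w))\<^sup>2 \<partial>M))"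
    using noise(2,4) \<gamma> c unfolding G_def by (intro add_mono mult_left_mono order_refl) auto
  also have "\<dots> = (\<integral>w. \<Phi> w + \<gamma> * G w + c * (\<omega> * (norm (r w))\<^sup>2) \<partial>M)"
    using i_\<Phi> i_G i_\<omega>R by simp
  also have "\<dots> \<le> (\<integral>w. rate * \<Psi> t w \<partial>M)"
  proof (rule integral_mono)
    show "integrable M (\<lambda>w. \<Phi> w + \<gamma> * G w + c * (\<omega> * (norm (r w))\<^sup>2))"
      using i_\<Phi> i_G i_\<omega>R by simp
    show "integrable M (\<lambda>w. rate * \<Psi> t w)"
      using int by simp
    show "\<Phi> w + \<gamma> * G w + c * (\<omega> * (norm (r w))\<^sup>2) \<le> rate * \<Psi> t w" for w
      using lyapunov_mean_le[of t w] by (simp add: \<Phi>_def G_def r_def c_def)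
  qed
  finally show "(\<integral>w. \<Psi> (Suc t) w \<partial>M) \<le> rate * (\<integral>w. \<Psi> t w \<partial>M)"
    by simp
qed

lemma integrable_\<Psi>: "integrable M (\<Psi> t)"
  and integral_\<Psi>_le: "(\<integral>w. \<Psi> t w \<partial>M) \<le> rate ^ t * lyapunov x0 u0"
proof (induction t)
  case 0
  interpret prob_space M
    by (rule prob)
  have "\<Psi> 0 = (\<lambda>w. lyapunov x0 u0)"
    by (simp add: fun_eq_iff \<Psi>_def init)
  then show "integrable M (\<Psi> 0)" "(\<integral>w. \<Psi> 0 w \<partial>M) \<le> rate ^ 0 * lyapunov x0 u0"
    by (simp_all add: prob_space)
next
  case (Suc t)
  show "integrable M (\<Psi> (Suc t))"
    by (rule expectation_step(1)[OF Suc.IH(1)])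
  have "(\<integral>w. \<Psi> (Suc t) w \<partial>M) \<le> rate * (\<integral>w. \<Psi> t w \<partial>M)"
    by (rule expectation_step(2)[OF Suc.IH(1)])
  also have "\<dots> \<le> rate * (rate ^ t * lyapunov x0 u0)"
    using Suc.IH(2) rate_pos by (intro mult_left_mono) auto
  finally show "(\<integral>w. \<Psi> (Suc t) w \<partial>M) \<le> rate ^ Suc t * lyapunov x0 u0"
    by simp
qed

lemma nn_integral_\<Psi>_le: "(\<integral>\<^sup>+w. ennreal (\<Psi> t w) \<partial>M) \<le> ennreal (rate ^ t * lyapunov x0 u0)"
proof -
  have "(\<integral>\<^sup>+w. ennreal (\<Psi> t w) \<partial>M) = ennreal (\<integral>w. \<Psi> t w \<partial>M)"
    by (rule nn_integral_eq_integral[OF integrable_\<Psi>]) (simp add: \<Psi>_def lyapunov_nonneg)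
  then show ?thesis
    using integral_\<Psi>_le by (simp add: ennreal_leI)
qed

lemma AE_\<Psi>_tendsto_0: "AE w in M. (\<lambda>t. \<Psi> t w) \<longlonglongrightarrow> 0"
proof (rule AE_tendsto_zero_of_summable_nn_integral[OF \<Psi>_measurable _ nn_integral_\<Psi>_le])
  show "0 \<le> \<Psi> t w" for t w
    by (simp add: \<Psi>_def lyapunov_nonneg)
  show "summable (\<lambda>t. rate ^ t * lyapunov x0 u0)"
    using rate_pos rate_less_1 by (intro summable_mult2 summable_geometric) auto
  show "0 \<le> rate ^ t * lyapunov x0 u0" for t
    using rate_pos lyapunov_nonneg by simp
qed

lemma AE_tendsto_saddle_point:
  "AE w in M. (\<lambda>t. x t w) \<longlonglongrightarrow> xs \<and> (\<lambda>t. xhat t w) \<longlonglongrightarrow> xs \<and> (\<lambda>t. u t w) \<longlonglongrightarrow> us"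
  using AE_\<Psi>_tendsto_0
proof eventually_elim
  case (elim w)
  have x: "(\<lambda>t. x t w) \<longlonglongrightarrow> xs"
    using norm_sq_le_lyapunov(1) by (intro tendsto_of_norm_sq_le[OF _ elim]) (simp add: \<Psi>_def)
  have u: "(\<lambda>t. u t w) \<longlonglongrightarrow> us"
    using norm_sq_le_lyapunov(2)
    by (intro tendsto_of_norm_sq_le[OF _ elim, where c = "1 / ((1 + \<omega>) * (1 / \<tau> + 2 * \<mu>h))"])
      (simp add: \<Psi>_def)
  have "(\<lambda>t. x t w - \<gamma> *\<^sub>R adjoint K (u t w)) \<longlonglongrightarrow> xs - \<gamma> *\<^sub>R adjoint K us"
    using adjoint_linear[OF K] by (intro tendsto_intros x bounded_linear.tendsto[OF _ u])
      (simp add: linear_conv_bounded_linear)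
  then have "(\<lambda>t. prox \<gamma> g (x t w - \<gamma> *\<^sub>R adjoint K (u t w))) \<longlonglongrightarrow> prox \<gamma> g (xs - \<gamma> *\<^sub>R adjoint K us)"
    by (rule continuous_on_tendsto_compose[OF continuous_on_prox[OF g_convex g_closed saddle_x \<gamma>]]) auto
  then have "(\<lambda>t. xhat t w) \<longlonglongrightarrow> xs"
    by (simp add: xhat_eq prox_g_fixed_point)
  with x u show ?case
    by blast
qed

end

theorem theorem7:
  fixes M :: "'w measure"
    and K :: "'x::euclidean_space \<Rightarrow> 'u::euclidean_space"
    and g :: "'x \<Rightarrow> ereal" and h :: "'u \<Rightarrow> ereal"
    and \<mu>g \<mu>h \<gamma> \<tau> \<omega> \<omega>ran \<zeta> :: real
    and x0 :: 'x and u0 :: 'u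
    and x xhat :: "nat \<Rightarrow> 'w \<Rightarrow> 'x" and u d :: "nat \<Rightarrow> 'w \<Rightarrow> 'u"
    and xs :: 'x and us :: 'u
  assumes M: "prob_space M"
    and K_lin: "linear K" and K_nz: "K \<noteq> (\<lambda>_. 0)"
    and g_pcc: "proper_fun g" "closed_fun g" "convex_fun g"
    and h_pcc: "proper_fun h" "closed_fun h" "convex_fun h"
    and g_sc: "strongly_convex \<mu>g g" and h_sc: "strongly_convex \<mu>h (conj_fun h)"
    and saddle_exists: "\<exists>xa ua. - adjoint K ua \<in> subdiff g xa \<and> K xa \<in> subdiff (conj_fun h) ua"
    and xs_primal: "\<forall>y. g xs + h (K xs) \<le> g y + h (K y)"
    and us_dual: "\<forall>v. conj_fun g (- adjoint K us) + conj_fun h us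
                       \<le> conj_fun g (- adjoint K v) + conj_fun h v"
    and \<mu>g_pos: "\<mu>g > 0" and \<mu>h_pos: "\<mu>h > 0"
    and \<gamma>_pos: "\<gamma> > 0" and \<tau>_pos: "\<tau> > 0" and \<omega>_nn: "\<omega> \<ge> 0"
    and \<omega>ran_nn: "\<omega>ran \<ge> 0" and \<zeta>_range: "0 \<le> \<zeta>" "\<zeta> \<le> 1"
    and step: "\<gamma> * \<tau> * ((1 - \<zeta>) * (onorm K)\<^sup>2 + \<omega>ran) \<le> 1"
    and init: "\<And>w. x 0 w = x0" "\<And>w. u 0 w = u0"
    and xhat_def: "\<And>t w. xhat t w = prox \<gamma> g (x t w - \<gamma> *\<^sub>R adjoint K (u t w))"
    and u_rec: "\<And>t w. u (Suc t) w = u t w + (1 / (1 + \<omega>)) *\<^sub>R d t w"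
    and x_rec: "\<And>t w. x (Suc t) w = xhat t w - \<gamma> *\<^sub>R adjoint K (d t w)"
    and d_meas: "\<And>t. d t \<in> borel_measurable M"
    and d_int: "\<And>t. integrable M (d t)"
    and d_unbiased: "\<And>t v. AE w in M.
          real_cond_exp M (gen_filtration M x u t) (\<lambda>w. inner v (d t w)) w
          = inner v (prox \<tau> (conj_fun h) (u t w + \<tau> *\<^sub>R K (xhat t w)) - u t w)"
    and d_var: "\<And>t. AE w in M.
          nn_cond_exp M (gen_filtration M x u t)
            (\<lambda>w. ennreal ((norm (d t w - (prox \<tau> (conj_fun h) (u t w + \<tau> *\<^sub>R K (xhat t w)) - u t w)))\<^sup>2)) w
          \<le> ennreal (\<omega> * (norm (prox \<tau> (conj_fun h) (u t w + \<tau> *\<^sub>R K (xhat t w)) - u t w))\<^sup>2)"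
    and d_var_K: "\<And>t. AE w in M.
          (let r = prox \<tau> (conj_fun h) (u t w + \<tau> *\<^sub>R K (xhat t w)) - u t w in
           0 \<le> \<omega>ran * (norm r)\<^sup>2 - \<zeta> * (norm (adjoint K r))\<^sup>2 \<and>
           nn_cond_exp M (gen_filtration M x u t)
             (\<lambda>w'. ennreal ((norm (adjoint K (d t w' -
                (prox \<tau> (conj_fun h) (u t w' + \<tau> *\<^sub>R K (xhat t w')) - u t w'))))\<^sup>2)) w
           \<le> ennreal (\<omega>ran * (norm r)\<^sup>2 - \<zeta> * (norm (adjoint K r))\<^sup>2))"
  shows "let c = max (1 / (1 + \<gamma> * \<mu>g)) (1 - 2 * \<tau> * \<mu>h / ((1 + \<omega>) * (1 + 2 * \<tau> * \<mu>h)));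
             \<Psi> = (\<lambda>t w. 1 / \<gamma> * (norm (x t w - xs))\<^sup>2
                       + (1 + \<omega>) * (1 / \<tau> + 2 * \<mu>h) * (norm (u t w - us))\<^sup>2)
         in c = 1 - min (\<gamma> * \<mu>g / (1 + \<gamma> * \<mu>g)) (2 * \<tau> * \<mu>h / ((1 + \<omega>) * (1 + 2 * \<tau> * \<mu>h)))
            \<and> c < 1
            \<and> (\<forall>t. (\<integral>\<^sup>+ w. ennreal (\<Psi> t w) \<partial>M) \<le> ennreal (c ^ t * (1 / \<gamma> * (norm (x0 - xs))\<^sup>2
                       + (1 + \<omega>) * (1 / \<tau> + 2 * \<mu>h) * (norm (u0 - us))\<^sup>2)))
            \<and> (AE w in M. (\<lambda>t. x t w) \<longlonglongrightarrow> xs)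
            \<and> (AE w in M. (\<lambda>t. xhat t w) \<longlonglongrightarrow> xs)
            \<and> (AE w in M. (\<lambda>t. u t w) \<longlonglongrightarrow> us)"
proof -
  obtain xa ua where xa: "- adjoint K ua \<in> subdiff g xa" and ua: "K xa \<in> subdiff (conj_fun h) ua"
    using saddle_exists by blast
  have adj: "inner (K p) q = inner p (adjoint K q)" for p q
    by (simp add: adjoint_works[OF K_lin])
  have "xs = xa"
    by (rule primal_minimizer_unique[OF g_sc \<mu>g_pos h_pcc adj xa ua xs_primal[rule_format, of xa]])
  moreover have "us = ua"
    by (rule dual_minimizer_unique[OF h_sc \<mu>h_pos adj xa ua us_dual[rule_format, of ua]])
  ultimately have saddle: "- adjoint K us \<in> subdiff g xs" "K xs \<in> subdiff (conj_fun h) us"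
    using xa ua by simp_all
  interpret randprox_cp M K g h \<mu>g \<mu>h \<gamma> \<tau> \<omega> \<omega>ran \<zeta> x0 u0 x xhat u d xs us
    by (rule randprox_cp.intro) (fact M K_lin g_pcc(2) g_sc h_sc saddle \<mu>g_pos \<mu>h_pos \<gamma>_pos \<tau>_pos \<omega>_nn
        \<zeta>_range(2) step init xhat_def u_rec x_rec d_meas d_unbiased d_var d_var_K)+
  show ?thesis
    unfolding Let_def rate_def[symmetric]
    using rate_eq rate_less_1 nn_integral_\<Psi>_le AE_tendsto_saddle_point
    by (auto simp: \<Psi>_def lyapunov_def elim: eventually_mono)
qed

end
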